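(* Assume $(\alpha_n)\in\ell^1(\mathbb Z)$, $\alpha_n=\overline{\alpha_{-n}}$, $\alpha_0=0$, $\sum_n\alpha_n=-\frac1{4\pi}$, and that $(\alpha_n)$ is generic. Then the solution $(q_n(p))\in\ell^2(\mathbb Z)$ of $$q_n(p)=-\frac{4\pi}{\sqrt{\omega n-ip}}\sum_{k\ne0}\alpha_kq_{n+k}(p)-\frac{2i\sqrt{2\pi}}{\sqrt{\omega n-ip}\,(1+\sqrt{\omega n-ip})},\qquad n\in\mathbb Z,$$ has, in a neighborhood of $p=0$ on the imaginary axis, the form $q_n(p)=c_n(p)+d_n(p)\sqrt p$ for all $n\in\mathbb Z$, where $c_n,d_n$ are analytic at $p=0$.
   Context: $\omega>0$ fixed; square roots use the principal branch ($\sqrt{\rho e^{i\vartheta}}=\sqrt\rho e^{i\vartheta/2}$, $-\pi<\vartheta\le\pi$). This system is the one satisfied by $q_n(p)=\tilde q(p+i\omega n)$, $0\le\Im p<\omega$, where $\tilde q$ is the Laplace transform of the charge associated with the time-periodic point interaction of strength $\alpha(t)=\sum_n\alpha_ne^{-in\omega t}$ and initial datum the bound state of $H_{\alpha(0)}$. Genericity: with $\tilde\alpha=(\alpha_1,\alpha_2,\dots)\in\ell^1(\mathbb N)$ and the shift $(\mathcal Ta)_n=a_{n+1}$ on $\ell^1(\mathbb N)$, $(\alpha_n)$ is generic if $e_1=(1,0,0,\dots)$ lies in the $\ell^1(\mathbb N)$-closure of the linear span of $\{\mathcal T^n\tilde\alpha:n\ge0\}$. *)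

theory Defs
  imports "HOL-Analysis.Analysis"
begin

text \<open>The sequence alpha-tilde = (alpha_1, alpha_2, ...) in l1(N), stored 0-based:
  position m holds alpha_(m+1).\<close>
definition alpha_tilde :: "(int \<Rightarrow> complex) \<Rightarrow> nat \<Rightarrow> complex" where
  "alpha_tilde \<alpha> m = \<alpha> (int m + 1)"

definition shiftT :: "(nat \<Rightarrow> complex) \<Rightarrow> nat \<Rightarrow> complex" where
  "shiftT a m = a (Suc m)"

definition e1 :: "nat \<Rightarrow> complex" where
  "e1 m = (if m = 0 then 1 else 0)"

definition l1norm :: "(nat \<Rightarrow> complex) \<Rightarrow> real" where
  "l1norm a = (\<Sum>m. norm (a m))"

text \<open>Genericity: e_1 lies in the l1-closure of span{T^n alpha-tilde : n \<ge> 0}.\<close>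
definition generic :: "(int \<Rightarrow> complex) \<Rightarrow> bool" where
  "generic \<alpha> \<longleftrightarrow> (\<forall>\<epsilon>>0. \<exists>N (b :: nat \<Rightarrow> complex).
      l1norm (\<lambda>m. e1 m - (\<Sum>j<N. b j * (shiftT ^^ j) (alpha_tilde \<alpha>) m)) < \<epsilon>)"

end

theory Submission
  imports Defs "HOL-Complex_Analysis.Complex_Analysis" "Jordan_Normal_Form.Determinant"
begin

text \<open>Substituting \<open>p = \<i>t\<^sup>2\<close> turns the coefficients \<open>\<surd>(\<omega>n - \<i>p) = \<surd>(\<omega>n + t\<^sup>2)\<close> into functions that
  are holomorphic in \<open>t\<close> near \<open>0\<close>. For \<open>\<bar>n\<bar> \<ge> N\<close> the factors \<open>4\<pi>/\<surd>(\<omega>n + t\<^sup>2)\<close> are small, so the tail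
  equations are solved by a Neumann series, holomorphically in \<open>t\<close>, in terms of the finitely many
  head values \<open>q\<^sub>n\<close>, \<open>\<bar>n\<bar> < N\<close>. This leaves a finite linear system with a holomorphic matrix, which is
  invertible at \<open>t = 0\<close>: a kernel vector gives a square-summable solution of the homogeneous system
  at \<open>t = 0\<close>; pairing it with \<open>q\<close> and using \<open>\<alpha>\<^sub>n = cnj \<alpha>\<^sub>-\<^sub>n\<close> shows \<open>q\<^sub>n = 0\<close> for \<open>n < 0\<close>, where
  \<open>\<surd>(\<omega>n)\<close> is imaginary, and genericity of \<open>\<alpha>\<close> propagates this to all \<open>n\<close>. By Cramer's rule the
  solution is holomorphic in \<open>t\<close> near \<open>0\<close>, and its even and odd parts in \<open>t = \<surd>(-\<i>p)\<close> give
  \<open>q\<^sub>n = c\<^sub>n(p) + d\<^sub>n(p) \<surd>p\<close>.\<close>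

section \<open>Unordered sums\<close>

lemma summable_on_norm_bound:
  fixes f :: "'i \<Rightarrow> 'b::banach"
  assumes M: "M summable_on UNIV" and bound: "\<And>k. norm (f k) \<le> M k"
  shows "f summable_on A" "(\<lambda>k. norm (f k)) summable_on A"
proof -
  have norms: "(\<lambda>k. norm (f k)) summable_on UNIV"
    by (rule summable_on_comparison_test[OF M]) (use bound in auto)
  then show "(\<lambda>k. norm (f k)) summable_on A" by (rule summable_on_subset_banach) simp
  show "f summable_on A"
    using abs_summable_summable[OF norms] by (rule summable_on_subset_banach) simp
qed

lemma norm_infsum_le_infsum_bound:
  fixes f :: "'i \<Rightarrow> 'b::banach"
  assumes M: "M summable_on UNIV" and bound: "\<And>k. norm (f k) \<le> M k"
  shows "norm (infsum f A) \<le> infsum M A"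
  using norm_infsum_le[of f A "infsum f A" M "infsum M A"] summable_on_norm_bound[OF M bound, of A]
    summable_on_subset_banach[OF M, of A] bound by auto

lemma infsum_compl_finite_small:
  fixes M :: "'i \<Rightarrow> real"
  assumes M: "M summable_on UNIV" and nonneg: "\<And>k. M k \<ge> 0" and e: "e > 0"
  shows "\<exists>X0. finite X0 \<and> (\<forall>X. finite X \<and> X0 \<subseteq> X \<longrightarrow> infsum M (UNIV - X) < e)"
proof -
  obtain X0 where X0: "finite X0" "dist (sum M X0) (infsum M UNIV) \<le> e/2"
    using has_sum_finite_approximation[of M UNIV "infsum M UNIV" "e/2"] M e by auto
  have "infsum M (UNIV - X) < e" if "finite X" "X0 \<subseteq> X" for X
  proof -
    have "infsum M UNIV = infsum M ((UNIV - X) \<union> X)" by simp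
    also have "\<dots> = infsum M (UNIV - X) + infsum M X"
      by (rule infsum_Un_disjoint) (use summable_on_subset_banach[OF M] in auto)
    finally have "infsum M UNIV = infsum M (UNIV - X) + infsum M X" .
    moreover have "sum M X0 \<le> sum M X" using that nonneg by (intro sum_mono2) auto
    moreover have "infsum M (UNIV - X) \<ge> 0" using nonneg by (simp add: infsum_nonneg)
    ultimately show ?thesis using X0 that e by (auto simp: dist_real_def abs_if split: if_splits)
  qed
  then show ?thesis using X0 by blast
qed

lemma infsum_shift_Suc:
  fixes f :: "nat \<Rightarrow> 'b::banach"
  assumes "f summable_on UNIV"
  shows "(\<Sum>\<^sub>\<infinity>j. f (Suc j)) = (\<Sum>\<^sub>\<infinity>j. f j) - f 0"
proof -
  have "{0} \<union> range Suc = UNIV" using not0_implies_Suc by auto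
  then have "(\<Sum>\<^sub>\<infinity>j. f j) = (\<Sum>\<^sub>\<infinity>j\<in>{0} \<union> range Suc. f j)" by simp
  also have "\<dots> = f 0 + (\<Sum>\<^sub>\<infinity>j\<in>range Suc. f j)"
    by (subst infsum_Un_disjoint) (use assms summable_on_subset_banach in auto)
  also have "(\<Sum>\<^sub>\<infinity>j\<in>range Suc. f j) = (\<Sum>\<^sub>\<infinity>j. f (Suc j))"
    using infsum_reindex[of Suc UNIV f] by (simp add: o_def)
  finally show ?thesis by simp
qed

lemma summable_on_product_nonneg:
  fixes Ma :: "'a \<Rightarrow> real" and Mb :: "'b \<Rightarrow> real"
  assumes Ma: "Ma summable_on UNIV" and Mb: "Mb summable_on UNIV"
    and nonneg: "\<And>x. Ma x \<ge> 0" "\<And>y. Mb y \<ge> 0"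
  shows "(\<lambda>(x, y). Ma x * Mb y) summable_on UNIV"
proof (rule nonneg_bdd_above_summable_on)
  show "0 \<le> (case z of (x, y) \<Rightarrow> Ma x * Mb y)" for z using nonneg by (cases z) auto
  show "bdd_above (sum (\<lambda>(x, y). Ma x * Mb y) ` {F. F \<subseteq> UNIV \<and> finite F})"
  proof (rule bdd_aboveI2)
    fix F :: "('a \<times> 'b) set" assume "F \<in> {F. F \<subseteq> UNIV \<and> finite F}"
    then have fin: "finite F" by simp
    have "sum (\<lambda>(x, y). Ma x * Mb y) F \<le> sum (\<lambda>(x, y). Ma x * Mb y) (fst ` F \<times> snd ` F)"
      by (rule sum_mono2) (use fin nonneg in \<open>auto intro: mult_nonneg_nonneg simp: rev_image_eqI\<close>)
    also have "\<dots> = sum Ma (fst ` F) * sum Mb (snd ` F)"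
      by (simp add: sum_product sum.cartesian_product)
    also have "\<dots> \<le> infsum Ma UNIV * infsum Mb UNIV"
      by (intro mult_mono finite_sum_le_infsum Ma Mb sum_nonneg infsum_nonneg) (use nonneg fin in auto)
    finally show "sum (\<lambda>(x, y). Ma x * Mb y) F \<le> infsum Ma UNIV * infsum Mb UNIV" .
  qed
qed

lemma summable_on_sum:
  fixes f :: "'i \<Rightarrow> 'a \<Rightarrow> 'b::{topological_comm_monoid_add,t2_space}"
  assumes "finite I" "\<And>i. i \<in> I \<Longrightarrow> f i summable_on A"
  shows "(\<lambda>x. \<Sum>i\<in>I. f i x) summable_on A"
  using assms by (induction I rule: finite_induct) (auto intro: summable_on_add)

lemma infsum_sum:
  fixes f :: "'i \<Rightarrow> 'a \<Rightarrow> 'b::{topological_comm_monoid_add,t2_space}"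
  assumes "finite I" "\<And>i. i \<in> I \<Longrightarrow> f i summable_on A"
  shows "(\<Sum>\<^sub>\<infinity>x\<in>A. \<Sum>i\<in>I. f i x) = (\<Sum>i\<in>I. \<Sum>\<^sub>\<infinity>x\<in>A. f i x)"
  using assms
proof (induction I rule: finite_induct)
  case (insert j I)
  have "(\<Sum>\<^sub>\<infinity>x\<in>A. f j x + (\<Sum>i\<in>I. f i x)) = (\<Sum>\<^sub>\<infinity>x\<in>A. f j x) + (\<Sum>\<^sub>\<infinity>x\<in>A. \<Sum>i\<in>I. f i x)"
    by (rule infsum_add) (use insert summable_on_sum[of I f A] in auto)
  then show ?case using insert by simp
qed simp

lemma infsum_diff:
  fixes f g :: "'a \<Rightarrow> 'b::{topological_ab_group_add,t2_space}"
  assumes "f summable_on A" "g summable_on A"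
  shows "(\<Sum>\<^sub>\<infinity>x\<in>A. f x - g x) = infsum f A - infsum g A"
  using infsum_add[OF assms(1) summable_on_uminus[THEN iffD2, OF assms(2)]] by (simp add: infsum_uminus)

lemma infsum_int_shift:
  fixes f :: "int \<Rightarrow> 'b::{comm_monoid_add,t2_space}"
  shows "(\<Sum>\<^sub>\<infinity>k. f (n + k)) = (\<Sum>\<^sub>\<infinity>m. f m)"
  by (rule infsum_reindex_bij_witness[of UNIV "\<lambda>m. m - n" "\<lambda>k. n + k"]) auto

lemma infsum_finite_support:
  fixes g :: "'a \<Rightarrow> 'b::{comm_monoid_add,t2_space}"
  assumes "finite H" "\<And>m. m \<notin> H \<Longrightarrow> g m = 0"
  shows "(\<Sum>\<^sub>\<infinity>m. g m) = (\<Sum>m\<in>H. g m)"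
  using infsum_cong_neutral[of H UNIV g g] assms by simp

lemma has_sum_geometric_half:
  fixes C :: real
  assumes "C \<ge> 0"
  shows "((\<lambda>j::nat. C / 2^j) has_sum (2 * C)) UNIV"
proof -
  have "(\<lambda>j::nat. C * (1/2)^j) sums (C * (1 / (1 - 1/2)))"
    by (intro sums_mult geometric_sums) simp
  then have "(\<lambda>j::nat. C / 2^j) sums (2 * C)" by (simp add: power_one_over field_simps)
  then show ?thesis by (rule sums_nonneg_imp_has_sum) (use assms in simp)
qed

lemma infsum_weighted_Cauchy_Schwarz:
  fixes w z :: "'i \<Rightarrow> real"
  assumes w: "w summable_on UNIV" and w0: "\<And>k. w k \<ge> 0" and z: "\<And>k. \<bar>z k\<bar> \<le> Z"
  shows "(\<Sum>\<^sub>\<infinity>k. w k * z k)^2 \<le> (\<Sum>\<^sub>\<infinity>k. w k) * (\<Sum>\<^sub>\<infinity>k. w k * (z k)^2)"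
proof -
  define W S1 S2 where "W = (\<Sum>\<^sub>\<infinity>k. w k)" and "S1 = (\<Sum>\<^sub>\<infinity>k. w k * z k)"
    and "S2 = (\<Sum>\<^sub>\<infinity>k. w k * (z k)^2)"
  have bound1: "norm (w k * z k) \<le> w k * Z" for k
    using w0[of k] z[of k] by (simp add: abs_mult mult_left_mono)
  have bound2: "norm (w k * (z k)^2) \<le> w k * Z^2" for k
    using w0[of k] power_mono[OF z[of k] abs_ge_zero, of 2] by (simp add: abs_mult mult_left_mono)
  have hW: "(w has_sum W) UNIV" using w W_def by (simp add: summable_iff_has_sum_infsum)
  have h1: "((\<lambda>k. w k * z k) has_sum S1) UNIV"
    using summable_on_norm_bound(1)[OF summable_on_cmult_left[OF w] bound1] S1_def
    by (simp add: summable_iff_has_sum_infsum)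
  have h2: "((\<lambda>k. w k * (z k)^2) has_sum S2) UNIV"
    using summable_on_norm_bound(1)[OF summable_on_cmult_left[OF w] bound2] S2_def
    by (simp add: summable_iff_has_sum_infsum)
  have quadratic: "S2 - 2 * m * S1 + m^2 * W \<ge> 0" for m
  proof -
    have "((\<lambda>k. w k * (z k)^2 + (- 2 * m) * (w k * z k) + m^2 * w k) has_sum (S2 + (- 2 * m) * S1 + m^2 * W)) UNIV"
      by (intro has_sum_add has_sum_cmult_right h1 h2 hW)
    moreover have "w k * (z k)^2 + (- 2 * m) * (w k * z k) + m^2 * w k = w k * (z k - m)^2" for k
      by (simp add: power2_eq_square algebra_simps)
    ultimately have "((\<lambda>k. w k * (z k - m)^2) has_sum (S2 - 2 * m * S1 + m^2 * W)) UNIV" by simp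
    then show ?thesis by (rule has_sum_nonneg) (use w0 in simp)
  qed
  have W0: "W \<ge> 0" by (rule has_sum_nonneg[OF hW]) (use w0 in auto)
  show ?thesis unfolding W_def[symmetric] S1_def[symmetric] S2_def[symmetric]
  proof (cases "W = 0")
    case True
    have "norm S1 \<le> (\<Sum>\<^sub>\<infinity>k. w k * Z)" unfolding S1_def
      by (rule norm_infsum_le_infsum_bound[OF summable_on_cmult_left[OF w] bound1])
    also have "\<dots> = W * Z" unfolding W_def by (rule infsum_cmult_left')
    finally show "S1^2 \<le> W * S2" using True by simp
  next
    case False
    then have "W > 0" using W0 by simp
    then show "S1^2 \<le> W * S2"
      using quadratic[of "S1 / W"] by (simp add: power2_eq_square field_simps)
  qed
qed

lemma uniform_limit_infsum:
  fixes F :: "'i \<Rightarrow> 'a \<Rightarrow> 'b::banach"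
  assumes M: "M summable_on UNIV" and nonneg: "\<And>k. M k \<ge> 0"
    and bound: "\<And>k x. x \<in> S \<Longrightarrow> norm (F k x) \<le> M k"
  shows "uniform_limit S (\<lambda>X x. \<Sum>k\<in>X. F k x) (\<lambda>x. \<Sum>\<^sub>\<infinity>k. F k x) (finite_subsets_at_top UNIV)"
proof (rule uniform_limitI)
  fix d :: real assume d: "d > 0"
  obtain X0 where X0: "finite X0" "\<And>X. finite X \<Longrightarrow> X0 \<subseteq> X \<Longrightarrow> infsum M (UNIV - X) < d"
    using infsum_compl_finite_small[OF M nonneg d] by blast
  show "\<forall>\<^sub>F X in finite_subsets_at_top UNIV. \<forall>x\<in>S. dist (\<Sum>k\<in>X. F k x) (\<Sum>\<^sub>\<infinity>k. F k x) < d"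
    unfolding eventually_finite_subsets_at_top
  proof (intro exI[of _ X0] conjI allI impI ballI)
    show "finite X0" by fact
    show "X0 \<subseteq> UNIV" by simp
    fix X x assume X: "finite X \<and> X0 \<subseteq> X \<and> X \<subseteq> UNIV" and x: "x \<in> S"
    have un: "(UNIV - X) \<union> X = UNIV" by blast
    have "(\<Sum>\<^sub>\<infinity>k\<in>(UNIV - X) \<union> X. F k x) = (\<Sum>\<^sub>\<infinity>k\<in>UNIV - X. F k x) + (\<Sum>\<^sub>\<infinity>k\<in>X. F k x)"
      by (rule infsum_Un_disjoint) (use summable_on_norm_bound(1)[OF M bound[OF x]] in auto)
    then have "(\<Sum>\<^sub>\<infinity>k. F k x) = (\<Sum>\<^sub>\<infinity>k\<in>UNIV - X. F k x) + (\<Sum>k\<in>X. F k x)"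
      using X un by simp
    then have "dist (\<Sum>k\<in>X. F k x) (\<Sum>\<^sub>\<infinity>k. F k x) = norm (\<Sum>\<^sub>\<infinity>k\<in>UNIV - X. F k x)"
      by (simp add: dist_norm)
    also have "\<dots> \<le> infsum M (UNIV - X)" by (rule norm_infsum_le_infsum_bound[OF M bound[OF x]])
    also have "\<dots> < d" using X0(2) X by blast
    finally show "dist (\<Sum>k\<in>X. F k x) (\<Sum>\<^sub>\<infinity>k. F k x) < d" .
  qed
qed

lemma holomorphic_on_infsum:
  fixes F :: "'i \<Rightarrow> complex \<Rightarrow> complex"
  assumes S: "open S" and hol: "\<And>k. F k holomorphic_on S"
    and bound: "\<And>k t. t \<in> S \<Longrightarrow> norm (F k t) \<le> M k" and M: "M summable_on UNIV"
    and nonneg: "\<And>k. M k \<ge> 0"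
  shows "(\<lambda>t. \<Sum>\<^sub>\<infinity>k. F k t) holomorphic_on S"
proof -
  have "(\<lambda>t. \<Sum>\<^sub>\<infinity>k. F k t) field_differentiable (at z)" if z: "z \<in> S" for z
  proof -
    obtain e where e: "e > 0" "cball z e \<subseteq> S" using S z open_contains_cball by blast
    have partial: "(\<lambda>t. \<Sum>k\<in>X. F k t) holomorphic_on S" for X by (intro holomorphic_intros hol)
    have "(\<lambda>t. \<Sum>\<^sub>\<infinity>k. F k t) holomorphic_on ball z e"
    proof (rule holomorphic_uniform_limit)
      have "\<And>k x. x \<in> cball z e \<Longrightarrow> norm (F k x) \<le> M k" using bound e(2) by blast
      then show "uniform_limit (cball z e) (\<lambda>X t. \<Sum>k\<in>X. F k t) (\<lambda>t. \<Sum>\<^sub>\<infinity>k. F k t) (finite_subsets_at_top UNIV)"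
        by (rule uniform_limit_infsum[OF M nonneg])
      show "\<forall>\<^sub>F X in finite_subsets_at_top UNIV.
              continuous_on (cball z e) (\<lambda>t. \<Sum>k\<in>X. F k t) \<and> (\<lambda>t. \<Sum>k\<in>X. F k t) holomorphic_on ball z e"
      proof (intro always_eventually allI conjI)
        fix X
        show "continuous_on (cball z e) (\<lambda>t. \<Sum>k\<in>X. F k t)"
          using holomorphic_on_imp_continuous_on[OF partial] e continuous_on_subset by blast
        show "(\<lambda>t. \<Sum>k\<in>X. F k t) holomorphic_on ball z e"
          using partial e ball_subset_cball holomorphic_on_subset by blast
      qed
    qed simp
    then show ?thesis by (rule holomorphic_on_imp_differentiable_at) (use e in auto)
  qed
  then show ?thesis unfolding holomorphic_on_def using field_differentiable_at_within by blast
qed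

section \<open>Square-summable sequences\<close>

lemma norm_le_sqrt_infsum_sq:
  fixes q :: "'i \<Rightarrow> 'b::real_normed_vector"
  assumes "(\<lambda>n. (norm (q n))^2) summable_on UNIV"
  shows "norm (q m) \<le> sqrt (\<Sum>\<^sub>\<infinity>n. (norm (q n))^2)"
  using finite_sum_le_infsum[OF assms, of "{m}"] by (simp add: real_le_rsqrt)

text \<open>Membership in \<open>\<ell>\<^sup>2\<close> with an explicit bound on the norm, phrased through finite partial
  sums so that no summability side conditions arise.\<close>
definition l2_bounded :: "('i \<Rightarrow> 'b::real_normed_vector) \<Rightarrow> real \<Rightarrow> bool" where
  "l2_bounded v B \<longleftrightarrow> (\<forall>F. finite F \<longrightarrow> L2_set (\<lambda>n. norm (v n)) F \<le> B)"

lemma l2_bounded_nonneg: "l2_bounded v B \<Longrightarrow> B \<ge> 0"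
  unfolding l2_bounded_def by (metis L2_set_empty finite.emptyI)

lemma l2_bounded_norm_le: "l2_bounded v B \<Longrightarrow> norm (v n) \<le> B"
  unfolding l2_bounded_def using member_le_L2_set[of "{n}" n "\<lambda>n. norm (v n)"] by force

lemma l2_bounded_summable_sq:
  fixes v :: "'i \<Rightarrow> 'b::real_normed_vector"
  assumes "l2_bounded v B"
  shows "(\<lambda>n. (norm (v n))^2) summable_on UNIV"
proof (rule nonneg_bdd_above_summable_on)
  show "bdd_above (sum (\<lambda>n. (norm (v n))^2) ` {F. F \<subseteq> UNIV \<and> finite F})"
  proof (rule bdd_aboveI2)
    fix F :: "'i set" assume "F \<in> {F. F \<subseteq> UNIV \<and> finite F}"
    then have "L2_set (\<lambda>n. norm (v n)) F \<le> B" using assms by (simp add: l2_bounded_def)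
    then have "(L2_set (\<lambda>n. norm (v n)) F)^2 \<le> B^2" by (intro power_mono) auto
    then show "(\<Sum>n\<in>F. (norm (v n))^2) \<le> B^2" unfolding L2_set_def by (simp add: sum_nonneg)
  qed
qed simp

lemma l2_bounded_scale:
  fixes u v :: "'i \<Rightarrow> 'b::real_normed_vector"
  assumes "\<And>n. norm (u n) \<le> c * norm (v n)" "c \<ge> 0" "l2_bounded v B"
  shows "l2_bounded u (c * B)"
  unfolding l2_bounded_def
proof (intro allI impI)
  fix F :: "'i set" assume fin: "finite F"
  have "L2_set (\<lambda>n. norm (u n)) F \<le> L2_set (\<lambda>n. c * norm (v n)) F"
    by (rule L2_set_mono) (use assms in auto)
  also have "\<dots> = c * L2_set (\<lambda>n. norm (v n)) F" by (rule L2_set_right_distrib[symmetric]) fact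
  also have "\<dots> \<le> c * B" using assms fin by (intro mult_left_mono) (auto simp: l2_bounded_def)
  finally show "L2_set (\<lambda>n. norm (u n)) F \<le> c * B" .
qed

lemma l2_bounded_mono: "l2_bounded v A \<Longrightarrow> A \<le> B \<Longrightarrow> l2_bounded v B"
  unfolding l2_bounded_def by force

lemma l2_bounded_add:
  fixes u v :: "'i \<Rightarrow> 'b::real_normed_vector"
  assumes "l2_bounded u A" "l2_bounded v B"
  shows "l2_bounded (\<lambda>n. u n + v n) (A + B)"
  unfolding l2_bounded_def
proof (intro allI impI)
  fix F :: "'i set" assume fin: "finite F"
  have "L2_set (\<lambda>n. norm (u n + v n)) F \<le> L2_set (\<lambda>n. norm (u n) + norm (v n)) F"
    by (rule L2_set_mono) (auto intro: norm_triangle_ineq)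
  also have "\<dots> \<le> L2_set (\<lambda>n. norm (u n)) F + L2_set (\<lambda>n. norm (v n)) F"
    by (rule L2_set_triangle_ineq)
  also have "\<dots> \<le> A + B" using assms fin by (intro add_mono) (auto simp: l2_bounded_def)
  finally show "L2_set (\<lambda>n. norm (u n + v n)) F \<le> A + B" .
qed

lemma l2_bounded_sum:
  assumes "finite I" "\<And>i. i \<in> I \<Longrightarrow> l2_bounded (u i) (B i)"
  shows "l2_bounded (\<lambda>n. \<Sum>i\<in>I. u i n) (\<Sum>i\<in>I. B i)"
  using assms
proof (induction I rule: finite_induct)
  case empty
  then show ?case by (simp add: l2_bounded_def L2_set_0')
next
  case (insert j I)
  then show ?case using l2_bounded_add[of "u j" "B j"] by simp
qed

lemma l2_bounded_finite_support:
  fixes v :: "'i \<Rightarrow> 'b::real_normed_vector"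
  assumes S: "finite S" and zero: "\<And>n. n \<notin> S \<Longrightarrow> v n = 0"
  shows "l2_bounded v (\<Sum>n\<in>S. norm (v n))"
  unfolding l2_bounded_def
proof (intro allI impI)
  fix F :: "'i set" assume fin: "finite F"
  have "L2_set (\<lambda>n. norm (v n)) F \<le> (\<Sum>n\<in>F. norm (v n))"
    using L2_set_le_sum_abs[of "\<lambda>n. norm (v n)" F] by simp
  also have "\<dots> \<le> (\<Sum>n\<in>F \<union> S. norm (v n))" by (rule sum_mono2) (use fin S in auto)
  also have "\<dots> = (\<Sum>n\<in>S. norm (v n))" by (rule sum.mono_neutral_right) (use fin S zero in auto)
  finally show "L2_set (\<lambda>n. norm (v n)) F \<le> (\<Sum>n\<in>S. norm (v n))" .
qed

lemma l2_bounded_limit: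
  fixes v :: "'i \<Rightarrow> 'b::real_normed_vector" and P :: "nat \<Rightarrow> 'i \<Rightarrow> 'b"
  assumes lim: "\<And>n. (\<lambda>J. P J n) \<longlonglongrightarrow> v n" and bound: "\<And>J. l2_bounded (P J) B"
  shows "l2_bounded v B"
  unfolding l2_bounded_def
proof (intro allI impI)
  fix F :: "'i set" assume fin: "finite F"
  have "(\<lambda>J. L2_set (\<lambda>n. norm (P J n)) F) \<longlonglongrightarrow> L2_set (\<lambda>n. norm (v n)) F"
    unfolding L2_set_def by (intro tendsto_intros lim)
  then show "L2_set (\<lambda>n. norm (v n)) F \<le> B"
    by (rule LIMSEQ_le_const2) (use bound fin in \<open>auto simp: l2_bounded_def\<close>)
qed

lemma summable_on_conv:
  fixes \<alpha> u :: "int \<Rightarrow> complex"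
  assumes \<alpha>: "(\<lambda>k. norm (\<alpha> k)) summable_on UNIV" and u: "\<And>m. norm (u m) \<le> C"
  shows "(\<lambda>k. \<alpha> k * u (n + k)) summable_on A"
  by (rule summable_on_norm_bound(1)[OF summable_on_cmult_left[OF \<alpha>, of C]])
     (simp add: norm_mult mult_left_mono u)

lemma norm_conv_le:
  fixes \<alpha> u :: "int \<Rightarrow> complex"
  assumes \<alpha>: "(\<lambda>k. norm (\<alpha> k)) summable_on UNIV" and u: "\<And>m. norm (u m) \<le> C"
  shows "norm (\<Sum>\<^sub>\<infinity>k. \<alpha> k * u (n + k)) \<le> (\<Sum>\<^sub>\<infinity>k. norm (\<alpha> k)) * C"
proof -
  have "norm (\<Sum>\<^sub>\<infinity>k. \<alpha> k * u (n + k)) \<le> (\<Sum>\<^sub>\<infinity>k. norm (\<alpha> k) * C)"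
    by (rule norm_infsum_le_infsum_bound[OF summable_on_cmult_left[OF \<alpha>]])
       (simp add: norm_mult mult_left_mono u)
  also have "\<dots> = (\<Sum>\<^sub>\<infinity>k. norm (\<alpha> k)) * C" by (rule infsum_cmult_left')
  finally show ?thesis .
qed

lemma norm_conv_sq_le:
  fixes \<alpha> v :: "int \<Rightarrow> complex"
  assumes \<alpha>: "(\<lambda>k. norm (\<alpha> k)) summable_on UNIV" and v: "\<And>m. norm (v m) \<le> B"
  shows "(norm (\<Sum>\<^sub>\<infinity>k. \<alpha> k * v (n + k)))^2
           \<le> (\<Sum>\<^sub>\<infinity>k. norm (\<alpha> k)) * (\<Sum>\<^sub>\<infinity>k. norm (\<alpha> k) * (norm (v (n + k)))^2)"
proof -
  have "(\<lambda>k. norm (\<alpha> k) * norm (v (n + k))) summable_on UNIV"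
    by (rule summable_on_norm_bound(1)[OF summable_on_cmult_left[OF \<alpha>, of B]])
       (simp add: mult_left_mono v)
  then have "norm (\<Sum>\<^sub>\<infinity>k. \<alpha> k * v (n + k)) \<le> (\<Sum>\<^sub>\<infinity>k. norm (\<alpha> k) * norm (v (n + k)))"
    by (rule norm_infsum_le_infsum_bound) (simp add: norm_mult)
  then have "(norm (\<Sum>\<^sub>\<infinity>k. \<alpha> k * v (n + k)))^2 \<le> (\<Sum>\<^sub>\<infinity>k. norm (\<alpha> k) * norm (v (n + k)))^2"
    by (intro power_mono) auto
  also have "\<dots> \<le> (\<Sum>\<^sub>\<infinity>k. norm (\<alpha> k)) * (\<Sum>\<^sub>\<infinity>k. norm (\<alpha> k) * (norm (v (n + k)))^2)"
    by (rule infsum_weighted_Cauchy_Schwarz[OF \<alpha>]) (use v in auto)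
  finally show ?thesis .
qed

lemma l2_bounded_conv:
  fixes \<alpha> v :: "int \<Rightarrow> complex"
  assumes \<alpha>: "(\<lambda>k. norm (\<alpha> k)) summable_on UNIV" and v: "l2_bounded v B"
  shows "l2_bounded (\<lambda>n. \<Sum>\<^sub>\<infinity>k. \<alpha> k * v (n + k)) ((\<Sum>\<^sub>\<infinity>k. norm (\<alpha> k)) * B)"
  unfolding l2_bounded_def
proof (intro allI impI)
  fix F :: "int set" assume fin: "finite F"
  define a where "a = (\<Sum>\<^sub>\<infinity>k. norm (\<alpha> k))"
  have a0: "a \<ge> 0" and B0: "B \<ge> 0" using l2_bounded_nonneg[OF v] by (simp_all add: a_def infsum_nonneg)
  have vB: "norm (v m) \<le> B" for m by (rule l2_bounded_norm_le[OF v])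
  have shifted: "(\<Sum>n\<in>F. (norm (v (n + k)))^2) \<le> B^2" for k
  proof -
    have "(\<Sum>n\<in>F. (norm (v (n + k)))^2) = (L2_set (\<lambda>m. norm (v m)) ((\<lambda>n. n + k) ` F))^2"
      unfolding L2_set_def by (simp add: sum_nonneg sum.reindex inj_on_def)
    also have "\<dots> \<le> B^2" using v fin by (intro power_mono) (auto simp: l2_bounded_def)
    finally show ?thesis .
  qed
  have weights: "(\<lambda>k. norm (\<alpha> k) * (\<Sum>n\<in>F. (norm (v (n + k)))^2)) summable_on UNIV"
    by (rule summable_on_norm_bound(1)[OF summable_on_cmult_left[OF \<alpha>, of "B^2"]])
       (simp add: sum_nonneg mult_left_mono shifted)
  have "(\<Sum>n\<in>F. (norm (\<Sum>\<^sub>\<infinity>k. \<alpha> k * v (n + k)))^2)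
          \<le> (\<Sum>n\<in>F. a * (\<Sum>\<^sub>\<infinity>k. norm (\<alpha> k) * (norm (v (n + k)))^2))"
    unfolding a_def by (intro sum_mono norm_conv_sq_le[OF \<alpha> vB])
  also have "\<dots> = a * (\<Sum>\<^sub>\<infinity>k. \<Sum>n\<in>F. norm (\<alpha> k) * (norm (v (n + k)))^2)"
  proof (subst infsum_sum[OF fin])
    show "(\<lambda>k. norm (\<alpha> k) * (norm (v (n + k)))^2) summable_on UNIV" for n
      by (rule summable_on_norm_bound(1)[OF summable_on_cmult_left[OF \<alpha>, of "B^2"]])
         (simp add: mult_left_mono power_mono vB)
  qed (simp add: sum_distrib_left)
  also have "\<dots> = a * (\<Sum>\<^sub>\<infinity>k. norm (\<alpha> k) * (\<Sum>n\<in>F. (norm (v (n + k)))^2))"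
    by (simp add: sum_distrib_left)
  also have "\<dots> \<le> a * (\<Sum>\<^sub>\<infinity>k. norm (\<alpha> k) * B^2)"
    by (intro mult_left_mono infsum_mono weights summable_on_cmult_left[OF \<alpha>] a0)
       (simp add: mult_left_mono shifted)+
  also have "\<dots> = (a * B)^2" by (simp add: infsum_cmult_left' a_def power2_eq_square)
  finally show "L2_set (\<lambda>n. norm (\<Sum>\<^sub>\<infinity>k. \<alpha> k * v (n + k))) F \<le> a * B"
    unfolding L2_set_def using a0 B0 by (simp add: real_le_lsqrt)
qed

lemma l2_bounded_reflection:
  fixes \<alpha> :: "int \<Rightarrow> complex"
  assumes \<alpha>: "(\<lambda>k. norm (\<alpha> k)) summable_on UNIV"
  shows "l2_bounded (\<lambda>n. \<alpha> (m - n)) (\<Sum>\<^sub>\<infinity>k. norm (\<alpha> k))"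
  unfolding l2_bounded_def
proof (intro allI impI)
  fix F :: "int set" assume fin: "finite F"
  define a where "a = (\<Sum>\<^sub>\<infinity>k. norm (\<alpha> k))"
  have le_a: "(\<Sum>n\<in>G. norm (\<alpha> (m - n))) \<le> a" if "finite G" for G
  proof -
    have "(\<Sum>n\<in>G. norm (\<alpha> (m - n))) = (\<Sum>k\<in>(\<lambda>n. m - n) ` G. norm (\<alpha> k))"
      by (simp add: sum.reindex inj_on_def)
    also have "\<dots> \<le> a" unfolding a_def by (rule finite_sum_le_infsum) (use that \<alpha> in auto)
    finally show ?thesis .
  qed
  have a0: "a \<ge> 0" by (simp add: a_def infsum_nonneg)
  have "(\<Sum>n\<in>F. (norm (\<alpha> (m - n)))^2) \<le> (\<Sum>n\<in>F. a * norm (\<alpha> (m - n)))"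
    using le_a[of "{_}"] by (intro sum_mono) (simp add: power2_eq_square mult_right_mono)
  also have "\<dots> \<le> a * a" using le_a[OF fin] a0 by (simp add: sum_distrib_left[symmetric] mult_left_mono)
  finally show "L2_set (\<lambda>n. norm (\<alpha> (m - n))) F \<le> a"
    unfolding L2_set_def using a0 by (simp add: real_le_lsqrt power2_eq_square)
qed

section \<open>Consequences of genericity\<close>

lemma generic_iff_shifted_combinations:
  "generic \<alpha> \<longleftrightarrow>
     (\<forall>\<epsilon>>0. \<exists>J b. l1norm (\<lambda>m. e1 m - (\<Sum>j<J. b j * \<alpha> (int m + int j + 1))) < \<epsilon>)"
proof -
  have "(shiftT ^^ j) a m = a (m + j)" for j a m
    by (induction j arbitrary: m) (simp_all add: shiftT_def)
  then show ?thesis by (simp add: generic_def alpha_tilde_def add.assoc)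
qed

lemma summable_on_norm_nat_shift:
  fixes \<alpha> :: "int \<Rightarrow> complex"
  assumes "(\<lambda>k. norm (\<alpha> k)) summable_on UNIV"
  shows "(\<lambda>m::nat. norm (\<alpha> (int m + c))) summable_on UNIV"
  using summable_on_reindex[of "\<lambda>m::nat. int m + c" UNIV "\<lambda>k. norm (\<alpha> k)"]
    summable_on_subset_banach[OF assms] by (simp add: inj_on_def o_def)

lemma norm_infsum_mult_le_l1norm:
  fixes w v :: "nat \<Rightarrow> complex"
  assumes w: "(\<lambda>m. norm (w m)) summable_on UNIV" and v: "\<And>m. norm (v m) \<le> C"
  shows "norm (\<Sum>\<^sub>\<infinity>m. w m * v m) \<le> l1norm w * C"
proof -
  have "norm (\<Sum>\<^sub>\<infinity>m. w m * v m) \<le> (\<Sum>\<^sub>\<infinity>m. norm (w m) * C)"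
    by (rule norm_infsum_le_infsum_bound[OF summable_on_cmult_left[OF w]])
       (simp add: norm_mult mult_left_mono v)
  also have "\<dots> = (\<Sum>\<^sub>\<infinity>m. norm (w m)) * C" by (rule infsum_cmult_left')
  also have "(\<Sum>\<^sub>\<infinity>m. norm (w m)) = l1norm w"
  proof -
    have "((\<lambda>m. norm (w m)) has_sum (\<Sum>m. norm (w m))) UNIV"
      by (rule sums_nonneg_imp_has_sum) (use summable_on_imp_summable[OF w] summable_sums in auto)
    then show ?thesis unfolding l1norm_def by (simp add: has_sum_iff)
  qed
  finally show ?thesis .
qed

lemma abs_summable_e1_minus_combination:
  fixes \<alpha> :: "int \<Rightarrow> complex"
  assumes \<alpha>: "(\<lambda>k. norm (\<alpha> k)) summable_on UNIV"
  shows "(\<lambda>m. norm (e1 m - (\<Sum>j<J. b j * \<alpha> (int m + int j + 1)))) summable_on UNIV"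
proof (rule summable_on_comparison_test)
  show "(\<lambda>m. norm (e1 m) + (\<Sum>j<J. norm (b j) * norm (\<alpha> (int m + int j + 1)))) summable_on UNIV"
  proof (intro summable_on_add summable_on_sum summable_on_cmult_right)
    show "(\<lambda>m. norm (e1 m)) summable_on UNIV"
      by (rule finite_nonzero_values_imp_summable_on) (simp add: e1_def)
    show "(\<lambda>m. norm (\<alpha> (int m + int j + 1))) summable_on UNIV" for j
      using summable_on_norm_nat_shift[OF \<alpha>, of "int j + 1"] by (simp add: add.assoc)
  qed simp
  show "norm (e1 m - (\<Sum>j<J. b j * \<alpha> (int m + int j + 1)))
          \<le> norm (e1 m) + (\<Sum>j<J. norm (b j) * norm (\<alpha> (int m + int j + 1)))" for m
  proof -
    have "norm (\<Sum>j<J. b j * \<alpha> (int m + int j + 1)) \<le> (\<Sum>j<J. norm (b j) * norm (\<alpha> (int m + int j + 1)))"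
      using norm_sum[of "\<lambda>j. b j * \<alpha> (int m + int j + 1)" "{..<J}"] by (simp add: norm_mult)
    then show ?thesis
      using norm_triangle_ineq4[of "e1 m" "\<Sum>j<J. b j * \<alpha> (int m + int j + 1)"] by linarith
  qed
qed simp

lemma infsum_e1_minus_combination:
  fixes \<alpha> :: "int \<Rightarrow> complex" and v :: "nat \<Rightarrow> complex"
  assumes \<alpha>: "(\<lambda>k. norm (\<alpha> k)) summable_on UNIV" and v: "\<And>m. norm (v m) \<le> C"
    and orth: "\<And>j. (\<Sum>\<^sub>\<infinity>m. \<alpha> (int m + int j + 1) * v m) = 0"
  shows "(\<Sum>\<^sub>\<infinity>m. (e1 m - (\<Sum>j<J. b j * \<alpha> (int m + int j + 1))) * v m) = v 0"
proof -
  have terms: "(\<lambda>m. b j * (\<alpha> (int m + int j + 1) * v m)) summable_on UNIV" for j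
  proof (rule summable_on_cmult_right)
    show "(\<lambda>m. \<alpha> (int m + int j + 1) * v m) summable_on UNIV"
      by (rule summable_on_norm_bound(1)[OF summable_on_cmult_left[OF summable_on_norm_nat_shift[OF \<alpha>, of "int j + 1"], of C]])
         (simp add: norm_mult mult_left_mono v add.assoc)
  qed
  have e1: "(\<lambda>m. e1 m * v m) summable_on UNIV" "(\<Sum>\<^sub>\<infinity>m. e1 m * v m) = v 0"
    using infsum_finite_support[of "{0}" "\<lambda>m. e1 m * v m"]
    by (auto simp: e1_def intro: finite_nonzero_values_imp_summable_on)
  have combination: "(\<lambda>m. \<Sum>j<J. b j * (\<alpha> (int m + int j + 1) * v m)) summable_on UNIV"
    by (rule summable_on_sum) (simp_all add: terms)
  have "(\<Sum>\<^sub>\<infinity>m. (e1 m - (\<Sum>j<J. b j * \<alpha> (int m + int j + 1))) * v m)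
      = (\<Sum>\<^sub>\<infinity>m. e1 m * v m - (\<Sum>j<J. b j * (\<alpha> (int m + int j + 1) * v m)))"
    by (simp add: left_diff_distrib sum_distrib_right mult.assoc)
  also have "\<dots> = v 0 - (\<Sum>\<^sub>\<infinity>m. \<Sum>j<J. b j * (\<alpha> (int m + int j + 1) * v m))"
    by (simp add: infsum_diff[OF e1(1) combination] e1(2))
  also have "(\<Sum>\<^sub>\<infinity>m. \<Sum>j<J. b j * (\<alpha> (int m + int j + 1) * v m)) = 0"
    by (simp add: infsum_sum terms infsum_cmult_right' orth)
  finally show ?thesis by simp
qed

text \<open>\<open>e\<^sub>1\<close> is an \<open>\<ell>\<^sup>1\<close>-limit of combinations of the shifts of \<open>\<alpha>\<^sub>1, \<alpha>\<^sub>2, \<dots>\<close>, all of which are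
  orthogonal to \<open>v\<close>.\<close>
lemma generic_first_vanishes:
  fixes \<alpha> :: "int \<Rightarrow> complex" and v :: "nat \<Rightarrow> complex"
  assumes gen: "generic \<alpha>" and \<alpha>: "(\<lambda>k. norm (\<alpha> k)) summable_on UNIV"
    and v: "\<And>m. norm (v m) \<le> C"
    and orth: "\<And>j. (\<Sum>\<^sub>\<infinity>m. \<alpha> (int m + int j + 1) * v m) = 0"
  shows "v 0 = 0"
proof -
  have C0: "C \<ge> 0" using v[of 0] norm_ge_zero order_trans by blast
  have "norm (v 0) \<le> e" if e: "e > 0" for e
  proof -
    have "e / (C + 1) > 0" using e C0 by simp
    then obtain J b where J: "l1norm (\<lambda>m. e1 m - (\<Sum>j<J. b j * \<alpha> (int m + int j + 1))) < e / (C + 1)"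
      using gen unfolding generic_iff_shifted_combinations by blast
    have "norm (\<Sum>\<^sub>\<infinity>m. (e1 m - (\<Sum>j<J. b j * \<alpha> (int m + int j + 1))) * v m)
        \<le> l1norm (\<lambda>m. e1 m - (\<Sum>j<J. b j * \<alpha> (int m + int j + 1))) * C"
      by (rule norm_infsum_mult_le_l1norm[OF abs_summable_e1_minus_combination[OF \<alpha>]]) (rule v)
    then have "norm (v 0) \<le> l1norm (\<lambda>m. e1 m - (\<Sum>j<J. b j * \<alpha> (int m + int j + 1))) * C"
      by (simp add: infsum_e1_minus_combination[where v = v and C = C, OF \<alpha> v orth])
    also have "\<dots> \<le> e / (C + 1) * C" using J C0 by (intro mult_right_mono) auto
    also have "\<dots> \<le> e" using e C0 by (simp add: field_simps)
    finally show ?thesis .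
  qed
  then show ?thesis using field_le_epsilon[of "norm (v 0)" 0] by simp
qed

lemma infsum_conv_vanishing_below:
  fixes \<alpha> q :: "int \<Rightarrow> complex"
  assumes below: "\<And>i. i < k \<Longrightarrow> q i = 0"
  shows "(\<Sum>\<^sub>\<infinity>l. \<alpha> l * q (n + l)) = (\<Sum>\<^sub>\<infinity>m::nat. \<alpha> (int m + k - n) * q (int m + k))"
proof -
  define g where "g m = int m + k" for m :: nat
  have "(\<Sum>\<^sub>\<infinity>l. \<alpha> l * q (n + l)) = (\<Sum>\<^sub>\<infinity>i. \<alpha> (i - n) * q i)"
    using infsum_int_shift[of "\<lambda>i. \<alpha> (i - n) * q i" n] by simp
  also have "\<dots> = (\<Sum>\<^sub>\<infinity>i\<in>range g. \<alpha> (i - n) * q i)"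
  proof (rule infsum_cong_neutral)
    show "\<alpha> (i - n) * q i = 0" if "i \<in> UNIV - range g" for i
    proof -
      have "i < k"
      proof (rule ccontr)
        assume "\<not> i < k"
        then have "i = g (nat (i - k))" by (simp add: g_def)
        then show False using that by auto
      qed
      then show ?thesis by (simp add: below)
    qed
  qed auto
  also have "\<dots> = (\<Sum>\<^sub>\<infinity>m. \<alpha> (g m - n) * q (g m))"
    by (subst infsum_reindex) (auto simp: inj_on_def g_def o_def)
  finally show ?thesis by (simp add: g_def algebra_simps)
qed

text \<open>Induction on \<open>n \<ge> 0\<close>: if \<open>q\<close> vanishes below \<open>k\<close>, the convolution equations at the points below
  \<open>k\<close> say that \<open>q(k + \<cdot>)\<close> is orthogonal to all shifts of \<open>\<alpha>\<^sub>1, \<alpha>\<^sub>2, \<dots>\<close>.\<close>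
lemma generic_vanishes:
  fixes \<alpha> q :: "int \<Rightarrow> complex"
  assumes gen: "generic \<alpha>" and \<alpha>: "(\<lambda>k. norm (\<alpha> k)) summable_on UNIV"
    and q: "\<And>m. norm (q m) \<le> C"
    and neg: "\<And>n. n < 0 \<Longrightarrow> q n = 0"
    and row: "\<And>n. q n = 0 \<Longrightarrow> (\<Sum>\<^sub>\<infinity>k. \<alpha> k * q (n + k)) = 0"
  shows "q n = 0"
proof -
  have "q (int k) = 0" for k
  proof (induction k rule: less_induct)
    case (less k)
    have below: "q i = 0" if "i < int k" for i
    proof (cases "i < 0")
      case False
      then show ?thesis using less.IH[of "nat i"] that by simp
    qed (rule neg)
    show ?case
    proof (rule generic_first_vanishes[OF gen \<alpha>, of "\<lambda>m. q (int m + int k)", simplified])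
      show "norm (q (int m + int k)) \<le> C" for m by (rule q)
      show "(\<Sum>\<^sub>\<infinity>m. \<alpha> (int m + int j + 1) * q (int m + int k)) = 0" for j
        using row[OF below[of "int k - int j - 1"]]
          infsum_conv_vanishing_below[where q = q and k = "int k" and \<alpha> = \<alpha> and n = "int k - int j - 1", OF below]
        by (simp add: algebra_simps)
    qed
  qed
  note nonneg = this
  show ?thesis
  proof (cases "n < 0")
    case False
    then show ?thesis using nonneg[of "nat n"] by simp
  qed (rule neg)
qed

section \<open>Holomorphic functions of \<open>\<surd>p\<close>\<close>

lemma summable_even_odd_terms:
  fixes g :: "nat \<Rightarrow> real"
  assumes g: "summable g" "\<And>k. g k \<ge> 0"
  shows "summable (\<lambda>n. g (2 * n))" "summable (\<lambda>n. g (2 * n + 1))"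
proof -
  have "(\<lambda>n. sum g {n * 2..<n * 2 + 2}) sums (suminf g)"
    by (rule sums_group) (use g summable_sums in auto)
  then have pairs: "summable (\<lambda>n. g (2 * n) + g (2 * n + 1))"
    by (simp add: sums_summable[of _ "suminf g"] numeral_2_eq_2 mult.commute)
  show "summable (\<lambda>n. g (2 * n))" "summable (\<lambda>n. g (2 * n + 1))"
    by (rule summable_comparison_test[OF _ pairs], use g in auto)+
qed

lemma power_series_holomorphic_on_ball:
  fixes c :: "nat \<Rightarrow> complex"
  assumes abs_conv: "\<And>w. norm w < R \<Longrightarrow> summable (\<lambda>n. norm (c n * w^n))"
  shows "eval_fps (Abs_fps c) holomorphic_on ball 0 R"
    and "norm w < R \<Longrightarrow> (\<lambda>n. c n * w^n) sums eval_fps (Abs_fps c) w"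
proof -
  have "ereal R \<le> fps_conv_radius (Abs_fps c)"
    unfolding fps_conv_radius_def
  proof (rule conv_radius_geI_ex')
    fix \<rho> :: real assume "0 < \<rho>" "ereal \<rho> < ereal R"
    then show "summable (\<lambda>n. fps_nth (Abs_fps c) n * of_real \<rho> ^ n)"
      using summable_norm_cancel[OF abs_conv[of "of_real \<rho>"]] by simp
  qed
  then show "eval_fps (Abs_fps c) holomorphic_on ball 0 R"
    by (intro holomorphic_on_eval_fps) (use eball_mono[of "ereal R"] in simp)
  show "(\<lambda>n. c n * w^n) sums eval_fps (Abs_fps c) w" if "norm w < R"
    unfolding eval_fps_def using summable_norm_cancel[OF abs_conv[OF that]] by (simp add: summable_sums)
qed

lemma abs_summable_even_odd_coeffs:
  fixes a :: "nat \<Rightarrow> complex"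
  assumes conv: "\<And>t. t \<in> ball 0 r \<Longrightarrow> summable (\<lambda>k. a k * t^k)" and r: "r > 0" and w: "norm w < r^2"
  shows "summable (\<lambda>n. norm (a (2 * n) * w^n))" "summable (\<lambda>n. norm (a (2 * n + 1) * w^n))"
proof -
  define s where "s = sqrt (norm w)"
  have s: "0 \<le> s" "s < r" "norm w = s^2"
    using w r by (auto simp: s_def real_sqrt_less_iff intro: real_less_lsqrt)
  define s' where "s' = (s + r) / 2"
  have s': "s < s'" "s' < r" using s by (auto simp: s'_def)
  then have "summable (\<lambda>k. a k * (of_real s' :: complex)^k)" using s conv by (simp add: dist_norm)
  then have "summable (\<lambda>k. norm (a k * (of_real s :: complex)^k))"
    by (rule powser_insidea) (use s s' in simp)
  then have parts: "summable (\<lambda>n. norm (a (2 * n)) * s^(2 * n))" "summable (\<lambda>n. norm (a (2 * n + 1)) * s^(2 * n + 1))"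
    using summable_even_odd_terms[of "\<lambda>k. norm (a k) * s^k"] s by (simp_all add: norm_mult norm_power)
  show "summable (\<lambda>n. norm (a (2 * n) * w^n))"
    using parts(1) by (simp add: s(3) norm_mult norm_power power_mult)
  show "summable (\<lambda>n. norm (a (2 * n + 1) * w^n))"
  proof (cases "s = 0")
    case True
    then show ?thesis
      using s(3) summable_0_powser[of "\<lambda>n. norm (a (2 * n + 1))"] by (simp add: norm_mult norm_power)
  next
    case False
    then have "norm (a (2 * n + 1) * w^n) = norm (a (2 * n + 1)) * s^(2 * n + 1) / s" for n
      by (simp add: s(3) norm_mult norm_power power_mult)
    then show ?thesis using summable_divide[OF parts(2), of s] by simp
  qed
qed

lemma holomorphic_even_odd_decomposition:
  fixes f :: "complex \<Rightarrow> complex"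
  assumes hol: "f holomorphic_on ball 0 r" and r: "r > 0"
  shows "\<exists>Ev Od. Ev holomorphic_on ball 0 (r^2) \<and> Od holomorphic_on ball 0 (r^2) \<and>
           (\<forall>t\<in>ball 0 r. f t = Ev (t^2) + t * Od (t^2))"
proof -
  define a where "a k = (deriv ^^ k) f 0 / fact k" for k
  have taylor: "(\<lambda>k. a k * t^k) sums f t" if "t \<in> ball 0 r" for t
    using holomorphic_power_series[OF hol that] by (simp add: a_def)
  note abs_conv = abs_summable_even_odd_coeffs[OF sums_summable[OF taylor] r]
  define Ev Od where "Ev = eval_fps (Abs_fps (\<lambda>n. a (2 * n)))" and "Od = eval_fps (Abs_fps (\<lambda>n. a (2 * n + 1)))"
  have "f t = Ev (t^2) + t * Od (t^2)" if t: "t \<in> ball 0 r" for t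
  proof -
    have "norm (t^2) < r^2" using t by (simp add: norm_power power_strict_mono)
    then have "(\<lambda>n. a (2 * n) * (t^2)^n + t * (a (2 * n + 1) * (t^2)^n)) sums (Ev (t^2) + t * Od (t^2))"
      unfolding Ev_def Od_def
      by (intro sums_add sums_mult power_series_holomorphic_on_ball(2)) (use abs_conv in auto)
    moreover have "(\<lambda>n. \<Sum>k\<in>{n * 2..<n * 2 + 2}. a k * t^k) sums f t"
      by (rule sums_group[OF taylor[OF t]]) simp
    moreover have "{n * 2..<n * 2 + 2} = {2 * n, 2 * n + 1}" for n :: nat by auto
    ultimately show ?thesis
      by (simp add: power_mult[symmetric] algebra_simps sums_unique2)
  qed
  moreover have "Ev holomorphic_on ball 0 (r^2)" "Od holomorphic_on ball 0 (r^2)"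
    unfolding Ev_def Od_def by (intro power_series_holomorphic_on_ball(1); use abs_conv in blast)+
  ultimately show ?thesis by blast
qed

lemma csqrt_imaginary:
  assumes "y \<ge> 0"
  shows "csqrt (\<i> * of_real y) = (1 + \<i>) / of_real (sqrt 2) * of_real (sqrt y)"
proof (rule csqrt_unique)
  have "(of_real (sqrt 2) :: complex)^2 = 2" by (simp flip: of_real_power)
  then show "((1 + \<i>) / of_real (sqrt 2) * of_real (sqrt y))^2 = \<i> * of_real y"
    using assms by (simp add: power_mult_distrib power_divide power2_eq_square algebra_simps flip: of_real_mult)
qed (insert assms, cases "y = 0", simp_all)

text \<open>\<open>c\<close> and \<open>d\<close> come from the even and odd parts in \<open>t\<close>, using \<open>t\<^sup>2 = -\<i>p\<close> and
  \<open>t = (1 - \<i>)/\<surd>2 \<cdot> \<surd>p\<close> for \<open>p = \<i>t\<^sup>2\<close>.\<close>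
lemma holomorphic_sqrt_decomposition:
  fixes F :: "complex \<Rightarrow> complex"
  assumes hol: "F holomorphic_on ball 0 r" and r: "r > 0"
  shows "\<exists>c d. c analytic_on {0} \<and> d analytic_on {0} \<and>
           (\<forall>y. 0 < y \<and> y < r^2 \<longrightarrow>
              F (of_real (sqrt y)) = c (\<i> * of_real y) + d (\<i> * of_real y) * csqrt (\<i> * of_real y))"
proof -
  obtain Ev Od where EvOd: "Ev holomorphic_on ball 0 (r^2)" "Od holomorphic_on ball 0 (r^2)"
    "\<And>t. t \<in> ball 0 r \<Longrightarrow> F t = Ev (t^2) + t * Od (t^2)"
    using holomorphic_even_odd_decomposition[OF hol r] by blast
  define c d where "c p = Ev (- \<i> * p)" and "d p = Od (- \<i> * p) * ((1 - \<i>) / of_real (sqrt 2))" for p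
  have rotate: "(\<lambda>p. - \<i> * p) ` ball 0 (r^2) \<subseteq> ball 0 (r^2)" by (auto simp: norm_mult)
  have "c holomorphic_on ball 0 (r^2)" "d holomorphic_on ball 0 (r^2)"
    unfolding c_def[abs_def] d_def[abs_def]
    by (intro holomorphic_intros holomorphic_on_compose_gen[OF _ EvOd(1) rotate, unfolded o_def]
          holomorphic_on_compose_gen[OF _ EvOd(2) rotate, unfolded o_def])+
  then have analytic: "c analytic_on {0}" "d analytic_on {0}"
    using r by (auto simp: analytic_on_def intro!: exI[of _ "r^2"])
  have "F (of_real (sqrt y)) = c (\<i> * of_real y) + d (\<i> * of_real y) * csqrt (\<i> * of_real y)"
    if y: "0 < y" "y < r^2" for y
  proof -
    have "sqrt y < r" using y r by (simp add: real_sqrt_less_iff real_less_lsqrt)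
    then have "F (of_real (sqrt y)) = Ev (of_real y) + of_real (sqrt y) * Od (of_real y)"
      using EvOd(3)[of "of_real (sqrt y)"] y by (simp flip: of_real_power)
    moreover have "(1 - \<i>) / of_real (sqrt 2) * ((1 + \<i>) / of_real (sqrt 2)) = (1 :: complex)"
      by (simp add: field_simps power2_eq_square flip: of_real_mult)
    moreover have "- \<i> * (\<i> * of_real y) = (of_real y :: complex)" by simp
    then have "d (\<i> * of_real y) * csqrt (\<i> * of_real y)
        = Od (of_real y) * (((1 - \<i>) / of_real (sqrt 2) * ((1 + \<i>) / of_real (sqrt 2))) * of_real (sqrt y))"
      unfolding d_def csqrt_imaginary[OF less_imp_le[OF y(1)]] by (simp only: mult.assoc)
    ultimately show ?thesis by (simp add: c_def mult.commute)
  qed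
  with analytic show ?thesis by blast
qed

lemma holomorphic_on_det_mat:
  fixes A :: "nat \<Rightarrow> nat \<Rightarrow> complex \<Rightarrow> complex"
  assumes "\<And>i j. i < K \<Longrightarrow> j < K \<Longrightarrow> A i j holomorphic_on S"
  shows "(\<lambda>t. det (mat K K (\<lambda>(i, j). A i j t))) holomorphic_on S"
proof -
  have perm: "p i < K" if "p permutes {0..<K}" "i < K" for p i
    using permutes_in_image[OF that(1)] that(2) by simp
  have "det (mat K K (\<lambda>(i, j). A i j t)) =
      (\<Sum>p\<in>{p. p permutes {0..<K}}. signof p * (\<Prod>i = 0..<K. A i (p i) t))" for t
    by (subst det_def') (auto intro!: sum.cong prod.cong simp: perm)
  moreover have "(\<lambda>t. \<Sum>p\<in>{p. p permutes {0..<K}}. signof p * (\<Prod>i = 0..<K. A i (p i) t)) holomorphic_on S"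
    by (intro holomorphic_intros) (simp add: assms perm)
  ultimately show ?thesis by simp
qed

section \<open>The tail operator and its Neumann series\<close>

text \<open>For real \<open>t > 0\<close>, \<open>branch_root \<omega> n t = \<surd>(\<omega>n + t\<^sup>2)\<close> (lemma \<open>csqrt_eq_branch_root\<close>); unlike the
  principal root, it is holomorphic in \<open>t\<close> near \<open>0\<close> for every \<open>n\<close>.\<close>
definition branch_root :: "real \<Rightarrow> int \<Rightarrow> complex \<Rightarrow> complex" where
  "branch_root \<omega> n t =
     (if n = 0 then t
      else if n > 0 then csqrt (of_real (\<omega> * of_int n) + t^2)
      else \<i> * csqrt (of_real (\<omega> * of_int (- n)) - t^2))"

lemma branch_root_zero [simp]: "branch_root \<omega> 0 t = t"
  by (simp add: branch_root_def)

lemma branch_root_pos: "n > 0 \<Longrightarrow> branch_root \<omega> n t = csqrt (of_real (\<omega> * of_int n) + t^2)"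
  by (simp add: branch_root_def)

lemma branch_root_neg: "n < 0 \<Longrightarrow> branch_root \<omega> n t = \<i> * csqrt (of_real (\<omega> * of_int (- n)) - t^2)"
  by (simp add: branch_root_def)

lemma branch_root_square: "(branch_root \<omega> n t)^2 = of_real (\<omega> * of_int n) + t^2"
  by (cases n "0::int" rule: linorder_cases) (simp_all add: branch_root_def power_mult_distrib)

lemma csqrt_eq_branch_root:
  assumes y: "0 < y" "y < \<omega>"
  shows "csqrt (of_real (\<omega> * of_int n) - \<i> * (\<i> * of_real y)) = branch_root \<omega> n (of_real (sqrt y))"
proof (cases n "0::int" rule: linorder_cases)
  case less
  then have "\<omega> * of_int n + y \<le> 0" using y mult_left_mono[of "of_int n" "-1::real" \<omega>] by simp
  moreover have "\<omega> * of_int (- n) - y \<ge> 0" using calculation by simp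
  ultimately show ?thesis
    using less y by (simp add: branch_root_neg csqrt_of_real' flip: of_real_power of_real_diff)
qed (use y in \<open>simp_all add: branch_root_pos csqrt_of_real flip: of_real_power of_real_add\<close>)

definition imaginary_axis_system :: "real \<Rightarrow> (int \<Rightarrow> complex) \<Rightarrow> real \<Rightarrow> (int \<Rightarrow> complex) \<Rightarrow> bool" where
  "imaginary_axis_system \<omega> \<alpha> y q \<longleftrightarrow>
     (\<forall>n. q n =
        - (4 * pi / csqrt (of_real (\<omega> * of_int n) - \<i> * (\<i> * complex_of_real y))) *
            infsum (\<lambda>k. \<alpha> k * q (n + k)) (UNIV - {0})
        - 2 * \<i> * sqrt (2 * pi) /
            (csqrt (of_real (\<omega> * of_int n) - \<i> * (\<i> * complex_of_real y)) *
             (1 + csqrt (of_real (\<omega> * of_int n) - \<i> * (\<i> * complex_of_real y)))))"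

locale tail_contraction =
  fixes \<omega> :: real and \<alpha> :: "int \<Rightarrow> complex" and N :: int and r0 :: real
  assumes omega_pos: "\<omega> > 0" and alpha_summable: "(\<lambda>k. norm (\<alpha> k)) summable_on UNIV"
    and r0: "0 < r0" "r0 \<le> 1/2" "r0^2 \<le> \<omega>/2"
    and N_pos: "N \<ge> 1"
    and N_large: "(8 * pi * ((\<Sum>\<^sub>\<infinity>k. norm (\<alpha> k)) + 1))^2 \<le> \<omega> * of_int N / 2"
begin

abbreviation \<sigma> :: "int \<Rightarrow> complex \<Rightarrow> complex" where "\<sigma> \<equiv> branch_root \<omega>"

definition alpha_l1 :: real where "alpha_l1 = (\<Sum>\<^sub>\<infinity>k. norm (\<alpha> k))"

lemma alpha_l1_nonneg: "alpha_l1 \<ge> 0"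
  unfolding alpha_l1_def by (simp add: infsum_nonneg)

lemma norm_alpha_le: "norm (\<alpha> k) \<le> alpha_l1"
  unfolding alpha_l1_def using finite_sum_le_infsum[of "\<lambda>k. norm (\<alpha> k)" UNIV "{k}"] alpha_summable by auto

lemma norm_square_lt:
  fixes t :: complex
  assumes "t \<in> ball 0 r0"
  shows "norm (t^2) < \<omega>/2"
proof -
  have "norm t ^ 2 < r0 ^ 2" using assms r0 by (intro power_strict_mono) auto
  then show ?thesis using r0 by (simp add: norm_power)
qed

lemma norm_branch_root_sq: "norm (\<sigma> n t)^2 = norm (of_real (\<omega> * of_int n) + t^2)"
  by (simp flip: norm_power add: branch_root_square)

lemma branch_root_nonzero:
  assumes t: "t \<in> ball 0 r0" and n: "n \<noteq> 0"
  shows "\<sigma> n t \<noteq> 0"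
proof
  assume "\<sigma> n t = 0"
  then have "t^2 = - of_real (\<omega> * of_int n)"
    using branch_root_square[of \<omega> n t] by (metis add.commute eq_neg_iff_add_eq_0 zero_power2)
  then have "norm (of_real (\<omega> * of_int n) :: complex) = norm (t^2)" by (simp only: norm_minus_cancel)
  moreover have "\<omega> \<le> \<bar>\<omega> * of_int n\<bar>" using n omega_pos by (simp add: abs_mult)
  ultimately show False using norm_square_lt[OF t] omega_pos by (simp add: norm_mult abs_mult)
qed

lemma one_plus_branch_root_nonzero:
  assumes t: "t \<in> ball 0 r0"
  shows "1 + \<sigma> n t \<noteq> 0"
proof
  assume "1 + \<sigma> n t = 0"
  then have minus_one: "\<sigma> n t = -1" by (simp add: add_eq_0_iff)
  consider "n = 0" | "n > 0" | "n < 0" by linarith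
  then show False
  proof cases
    case 1
    then show False using minus_one t r0 by simp
  next
    case 2
    have "Re (\<sigma> n t) \<ge> 0" unfolding branch_root_pos[OF 2] by (rule Re_csqrt)
    then show False using minus_one by simp
  next
    case 3
    have "Re (t^2) < \<omega>" using norm_square_lt[OF t] abs_Re_le_cmod[of "t^2"] omega_pos by linarith
    moreover have "\<omega> \<le> - \<omega> * of_int n"
      using mult_left_mono[of 1 "- real_of_int n" \<omega>] 3 omega_pos by simp
    moreover have "Re 1 = Re (of_real (\<omega> * of_int n) + t^2)"
      using branch_root_square[of \<omega> n t] minus_one by simp
    ultimately show False by simp
  qed
qed

lemma holomorphic_branch_root: "\<sigma> n holomorphic_on ball 0 r0"
proof -
  have off_cut: "of_real (\<omega> * of_int \<bar>n\<bar>) + c * t^2 \<notin> \<real>\<^sub>\<le>\<^sub>0"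
    if "n \<noteq> 0" "t \<in> ball 0 r0" "norm c = 1" for c t :: complex
  proof -
    define z where "z = c * t^2"
    have "norm z < \<omega>/2" using norm_square_lt[OF that(2)] that(3) by (simp add: z_def norm_mult)
    then have "\<bar>Re z\<bar> < \<omega>/2" using abs_Re_le_cmod[of z] by linarith
    moreover have "\<omega> \<le> \<omega> * of_int \<bar>n\<bar>" using that(1) omega_pos by simp
    ultimately have "Re (of_real (\<omega> * of_int \<bar>n\<bar>) + z) > 0" by simp
    then show ?thesis unfolding z_def by (metis complex_nonpos_Reals_iff not_less)
  qed
  have root: "(\<lambda>t. csqrt (of_real (\<omega> * of_int \<bar>n\<bar>) + c * t^2)) holomorphic_on ball 0 r0"
    if "n \<noteq> 0" "norm c = 1" for c :: complex
  proof (rule holomorphic_on_csqrt')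
    show "(\<lambda>t. of_real (\<omega> * of_int \<bar>n\<bar>) + c * t^2) holomorphic_on ball 0 r0"
      by (intro holomorphic_intros)
    show "of_real (\<omega> * of_int \<bar>n\<bar>) + c * t^2 \<notin> \<real>\<^sub>\<le>\<^sub>0" if "t \<in> ball 0 r0" for t
      by (rule off_cut) (use that \<open>n \<noteq> 0\<close> \<open>norm c = 1\<close> in auto)
  qed
  consider "n = 0" | "n > 0" | "n < 0" by linarith
  then show ?thesis
  proof cases
    case 2
    then have "\<sigma> n = (\<lambda>t. csqrt (of_real (\<omega> * of_int \<bar>n\<bar>) + 1 * t^2))" by (auto simp: branch_root_pos)
    then show ?thesis using root[of 1] 2 by simp
  next
    case 3
    then have "\<sigma> n = (\<lambda>t. \<i> * csqrt (of_real (\<omega> * of_int \<bar>n\<bar>) + (-1) * t^2))" by (auto simp: branch_root_neg)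
    then show ?thesis using holomorphic_on_mult[OF holomorphic_on_const root[of "-1"]] 3 by simp
  qed (simp add: branch_root_def[abs_def])
qed

text \<open>This is where \<open>N_large\<close> enters: on the tail the coefficients \<open>4\<pi>/\<sigma>\<^sub>n\<close> are small compared to
  \<open>\<parallel>\<alpha>\<parallel>\<^sub>1\<close>.\<close>
lemma norm_branch_root_tail:
  assumes t: "t \<in> ball 0 r0" and n: "N \<le> \<bar>n\<bar>"
  shows "8 * pi * (alpha_l1 + 1) \<le> norm (\<sigma> n t)"
proof -
  have "\<omega> * of_int N \<le> \<bar>\<omega> * of_int n\<bar>" using omega_pos n by (simp add: abs_mult)
  moreover have "\<bar>\<omega> * of_int n\<bar> - norm (t^2) \<le> norm (of_real (\<omega> * of_int n) + t^2)"
    using norm_diff_ineq[of "of_real (\<omega> * of_int n)" "t^2"] by (simp only: norm_of_real)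
  moreover have "\<omega> \<le> \<omega> * of_int N" using omega_pos N_pos by simp
  ultimately have "\<omega> * of_int N / 2 \<le> norm (\<sigma> n t)^2"
    using norm_branch_root_sq[of n t] norm_square_lt[OF t] by linarith
  then have "(8 * pi * (alpha_l1 + 1))^2 \<le> norm (\<sigma> n t)^2" using N_large unfolding alpha_l1_def by linarith
  then show ?thesis using power2_le_imp_le norm_ge_zero by blast
qed

lemma tail_coeff_small:
  assumes t: "t \<in> ball 0 r0" and n: "N \<le> \<bar>n\<bar>"
  shows "4 * pi / norm (\<sigma> n t) \<le> 1 / (2 * (alpha_l1 + 1))" and "2 \<le> norm (\<sigma> n t)"
    and "\<sigma> n t \<noteq> 0"
proof -
  have big: "8 * pi * (alpha_l1 + 1) \<le> norm (\<sigma> n t)" by (rule norm_branch_root_tail[OF t n])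
  have pos: "0 < 8 * pi * (alpha_l1 + 1)" using alpha_l1_nonneg by (intro mult_pos_pos) auto
  moreover have "0 < norm (\<sigma> n t)" using big pos by linarith
  ultimately have prod_pos: "0 < norm (\<sigma> n t) * (8 * pi * (alpha_l1 + 1))" by simp
  have "4 * pi / norm (\<sigma> n t) \<le> 4 * pi / (8 * pi * (alpha_l1 + 1))"
    by (rule divide_left_mono[OF big _ prod_pos]) simp
  also have "\<dots> = 4 * pi / (4 * pi * (2 * (alpha_l1 + 1)))"
    by (rule arg_cong[where f = "\<lambda>x. 4 * pi / x"]) (simp add: algebra_simps)
  also have "\<dots> = 1 / (2 * (alpha_l1 + 1))" by (rule nonzero_divide_mult_cancel_left) simp
  finally show "4 * pi / norm (\<sigma> n t) \<le> 1 / (2 * (alpha_l1 + 1))" .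
  have "8 * pi \<le> 8 * pi * (alpha_l1 + 1)" using alpha_l1_nonneg by simp
  then show "2 \<le> norm (\<sigma> n t)" using big pi_gt3 by linarith
  then show "\<sigma> n t \<noteq> 0" by auto
qed

definition tail_op :: "complex \<Rightarrow> (int \<Rightarrow> complex) \<Rightarrow> int \<Rightarrow> complex" where
  "tail_op t u n = (if N \<le> \<bar>n\<bar> then - (4 * pi / \<sigma> n t) * (\<Sum>\<^sub>\<infinity>k. \<alpha> k * u (n + k)) else 0)"

lemma tail_op_head: "\<not> N \<le> \<bar>n\<bar> \<Longrightarrow> tail_op t u n = 0"
  by (simp add: tail_op_def)

lemma norm_tail_op_le_conv:
  assumes t: "t \<in> ball 0 r0"
  shows "norm (tail_op t u n) \<le> norm (\<Sum>\<^sub>\<infinity>k. \<alpha> k * u (n + k)) / (2 * (alpha_l1 + 1))"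
proof (cases "N \<le> \<bar>n\<bar>")
  case True
  then have "norm (tail_op t u n) = 4 * pi / norm (\<sigma> n t) * norm (\<Sum>\<^sub>\<infinity>k. \<alpha> k * u (n + k))"
    by (simp add: tail_op_def norm_mult norm_divide)
  also have "\<dots> \<le> 1 / (2 * (alpha_l1 + 1)) * norm (\<Sum>\<^sub>\<infinity>k. \<alpha> k * u (n + k))"
    by (rule mult_right_mono[OF tail_coeff_small(1)[OF t True]]) simp
  finally show ?thesis by simp
qed (simp add: tail_op_def alpha_l1_nonneg add_nonneg_pos)

lemma norm_tail_op_le:
  assumes t: "t \<in> ball 0 r0" and u: "\<And>m. norm (u m) \<le> C"
  shows "norm (tail_op t u n) \<le> C / 2"
proof -
  have C0: "C \<ge> 0" using u[of 0] norm_ge_zero order_trans by blast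
  have "norm (tail_op t u n) \<le> alpha_l1 * C / (2 * (alpha_l1 + 1))"
    using norm_tail_op_le_conv[OF t, of u n] norm_conv_le[where u = u and C = C and n = n, OF alpha_summable u] alpha_l1_nonneg
    by (simp add: alpha_l1_def divide_right_mono order_trans)
  also have "\<dots> \<le> C / 2" using C0 alpha_l1_nonneg by (simp add: field_simps mult_right_mono)
  finally show ?thesis .
qed

lemma l2_bounded_tail_op:
  assumes t: "t \<in> ball 0 r0" and u: "l2_bounded u B"
  shows "l2_bounded (tail_op t u) (B / 2)"
proof (rule l2_bounded_mono)
  show "l2_bounded (tail_op t u) (1 / (2 * (alpha_l1 + 1)) * (alpha_l1 * B))"
  proof (rule l2_bounded_scale[OF _ _ l2_bounded_conv[OF alpha_summable u, folded alpha_l1_def]])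
    show "norm (tail_op t u n) \<le> 1 / (2 * (alpha_l1 + 1)) * norm (\<Sum>\<^sub>\<infinity>k. \<alpha> k * u (n + k))" for n
      using norm_tail_op_le_conv[OF t, of u n] by simp
  qed (use alpha_l1_nonneg in simp)
  show "1 / (2 * (alpha_l1 + 1)) * (alpha_l1 * B) \<le> B / 2"
    using l2_bounded_nonneg[OF u] alpha_l1_nonneg by (simp add: field_simps mult_right_mono)
qed

lemma holomorphic_tail_op:
  assumes hol: "\<And>m. F m holomorphic_on ball 0 r0"
    and bound: "\<And>m t. t \<in> ball 0 r0 \<Longrightarrow> norm (F m t) \<le> C"
  shows "(\<lambda>t. tail_op t (\<lambda>m. F m t) n) holomorphic_on ball 0 r0"
proof (cases "N \<le> \<bar>n\<bar>")
  case True
  have "norm (F 0 0) \<le> C" by (rule bound) (use r0 in simp)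
  then have C0: "C \<ge> 0" using norm_ge_zero order_trans by blast
  have conv: "(\<lambda>t. \<Sum>\<^sub>\<infinity>k. \<alpha> k * F (n + k) t) holomorphic_on ball 0 r0"
  proof (rule holomorphic_on_infsum[where M = "\<lambda>k. norm (\<alpha> k) * C"])
    show "(\<lambda>t. \<alpha> k * F (n + k) t) holomorphic_on ball 0 r0" for k by (intro holomorphic_intros hol)
    show "norm (\<alpha> k * F (n + k) t) \<le> norm (\<alpha> k) * C" if "t \<in> ball 0 r0" for k t
      unfolding norm_mult by (rule mult_left_mono[OF bound[OF that]]) simp
    show "(\<lambda>k. norm (\<alpha> k) * C) summable_on UNIV" by (rule summable_on_cmult_left[OF alpha_summable])
    show "0 \<le> norm (\<alpha> k) * C" for k using C0 by simp
  qed simp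
  have "(\<lambda>t. - (4 * pi / \<sigma> n t) * (\<Sum>\<^sub>\<infinity>k. \<alpha> k * F (n + k) t)) holomorphic_on ball 0 r0"
    by (intro holomorphic_intros conv holomorphic_branch_root) (use tail_coeff_small(3) True in auto)
  then show ?thesis using True by (simp add: tail_op_def)
qed (simp add: tail_op_def)

lemma tail_op_add:
  assumes "\<And>m. norm (u m) \<le> C" "\<And>m. norm (v m) \<le> D"
  shows "tail_op t (\<lambda>m. u m + v m) n = tail_op t u n + tail_op t v n"
  using infsum_add[OF summable_on_conv[where u = u, OF alpha_summable assms(1)]
      summable_on_conv[where u = v, OF alpha_summable assms(2)]]
  by (simp add: tail_op_def distrib_left)

lemma tail_op_cmult: "tail_op t (\<lambda>m. c * u m) n = c * tail_op t u n"
proof -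
  have "(\<Sum>\<^sub>\<infinity>k. \<alpha> k * (c * u (n + k))) = c * (\<Sum>\<^sub>\<infinity>k. \<alpha> k * u (n + k))"
    by (subst infsum_cmult_right'[symmetric]) (simp add: algebra_simps)
  then show ?thesis by (simp add: tail_op_def)
qed

lemma tail_op_sum:
  assumes I: "finite I" and bound: "\<And>i m. i \<in> I \<Longrightarrow> norm (u i m) \<le> C"
  shows "tail_op t (\<lambda>m. \<Sum>i\<in>I. c i * u i m) n = (\<Sum>i\<in>I. c i * tail_op t (u i) n)"
proof -
  have "(\<Sum>\<^sub>\<infinity>k. \<alpha> k * (\<Sum>i\<in>I. c i * u i (n + k))) = (\<Sum>\<^sub>\<infinity>k. \<Sum>i\<in>I. c i * (\<alpha> k * u i (n + k)))"
    by (simp add: sum_distrib_left algebra_simps)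
  also have "\<dots> = (\<Sum>i\<in>I. \<Sum>\<^sub>\<infinity>k. c i * (\<alpha> k * u i (n + k)))"
  proof (rule infsum_sum[OF I])
    fix i assume "i \<in> I"
    have "(\<lambda>k. \<alpha> k * u i (n + k)) summable_on UNIV"
      by (rule summable_on_conv[OF alpha_summable bound[OF \<open>i \<in> I\<close>]])
    then show "(\<lambda>k. c i * (\<alpha> k * u i (n + k))) summable_on UNIV" by (rule summable_on_cmult_right)
  qed
  also have "\<dots> = (\<Sum>i\<in>I. c i * (\<Sum>\<^sub>\<infinity>k. \<alpha> k * u i (n + k)))"
    by (simp add: infsum_cmult_right')
  finally show ?thesis by (simp add: tail_op_def sum_distrib_left algebra_simps)
qed

text \<open>The tail operator halves sup-norms.\<close>
lemma tail_fixed_point_unique: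
  assumes t: "t \<in> ball 0 r0" and w: "\<And>m. norm (w m) \<le> C"
    and head: "\<And>m. \<not> N \<le> \<bar>m\<bar> \<Longrightarrow> w m = 0"
    and fixed: "\<And>m. N \<le> \<bar>m\<bar> \<Longrightarrow> w m = tail_op t w m"
  shows "w n = 0"
proof -
  have C0: "C \<ge> 0" using w[of 0] norm_ge_zero order_trans by blast
  have "norm (w m) \<le> C / 2^j" for j m
  proof (induction j arbitrary: m)
    case 0
    then show ?case using w by simp
  next
    case (Suc j)
    show ?case
    proof (cases "N \<le> \<bar>m\<bar>")
      case True
      have "norm (tail_op t w m) \<le> (C / 2^j) / 2" by (rule norm_tail_op_le[OF t Suc])
      then show ?thesis using fixed[OF True] by simp
    next
      case False
      then show ?thesis using head C0 by simp
    qed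
  qed
  moreover have "(\<lambda>j. C / 2^j) \<longlonglongrightarrow> 0" by (rule LIMSEQ_divide_realpow_zero) simp
  ultimately have "norm (w n) \<le> 0" by (intro LIMSEQ_le_const) auto
  then show ?thesis by simp
qed

primrec neumann_term :: "(int \<Rightarrow> complex \<Rightarrow> complex) \<Rightarrow> nat \<Rightarrow> int \<Rightarrow> complex \<Rightarrow> complex" where
  "neumann_term h 0 = (\<lambda>n t. if N \<le> \<bar>n\<bar> then h n t else 0)"
| "neumann_term h (Suc j) = (\<lambda>n t. tail_op t (\<lambda>m. neumann_term h j m t) n)"

definition neumann_sum :: "(int \<Rightarrow> complex \<Rightarrow> complex) \<Rightarrow> int \<Rightarrow> complex \<Rightarrow> complex" where
  "neumann_sum h n t = (\<Sum>\<^sub>\<infinity>j. neumann_term h j n t)"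

lemma neumann_term_head: "\<not> N \<le> \<bar>n\<bar> \<Longrightarrow> neumann_term h j n t = 0"
  by (cases j) (simp_all add: tail_op_head)

lemma neumann_sum_head: "\<not> N \<le> \<bar>n\<bar> \<Longrightarrow> neumann_sum h n t = 0"
  by (simp add: neumann_sum_def neumann_term_head)

context
  fixes h :: "int \<Rightarrow> complex \<Rightarrow> complex" and C :: real
  assumes h: "\<And>n t. t \<in> ball 0 r0 \<Longrightarrow> norm (h n t) \<le> C" and C: "C \<ge> 0"
begin

lemma norm_neumann_term_le:
  assumes t: "t \<in> ball 0 r0"
  shows "norm (neumann_term h j n t) \<le> C / 2^j"
proof (induction j arbitrary: n)
  case 0
  then show ?case using h[OF t] C by simp
next
  case (Suc j)
  have "norm (tail_op t (\<lambda>m. neumann_term h j m t) n) \<le> (C / 2^j) / 2"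
    by (rule norm_tail_op_le[OF t Suc])
  then show ?case by simp
qed

lemma summable_neumann_term:
  assumes t: "t \<in> ball 0 r0"
  shows "(\<lambda>j. neumann_term h j n t) summable_on A"
  by (rule summable_on_norm_bound(1)[of "\<lambda>j. C / 2^j"])
     (use has_sum_geometric_half[OF C] norm_neumann_term_le[OF t] in \<open>auto simp: has_sum_iff\<close>)

lemma norm_neumann_sum_le:
  assumes t: "t \<in> ball 0 r0"
  shows "norm (neumann_sum h n t) \<le> 2 * C"
proof -
  have geometric: "((\<lambda>j::nat. C / 2^j) has_sum (2 * C)) UNIV" by (rule has_sum_geometric_half[OF C])
  have "norm (neumann_sum h n t) \<le> (\<Sum>\<^sub>\<infinity>j. C / 2^j)" unfolding neumann_sum_def
    by (rule norm_infsum_le_infsum_bound) (use geometric norm_neumann_term_le[OF t] in \<open>auto simp: has_sum_iff\<close>)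
  then show ?thesis using geometric by (simp add: has_sum_iff)
qed

lemma neumann_sum_fixed_point:
  assumes t: "t \<in> ball 0 r0" and n: "N \<le> \<bar>n\<bar>"
  shows "neumann_sum h n t = tail_op t (\<lambda>m. neumann_sum h m t) n + h n t"
proof -
  let ?F = "\<lambda>j m. neumann_term h j m t"
  have "(\<lambda>(k, j). norm (\<alpha> k) * (C / 2^j)) summable_on UNIV"
    by (rule summable_on_product_nonneg[OF alpha_summable has_sum_imp_summable[OF has_sum_geometric_half[OF C]]])
       (use C in auto)
  then have product: "(\<lambda>(k, j). \<alpha> k * ?F j (n + k)) summable_on UNIV"
  proof (rule summable_on_norm_bound(1))
    show "norm (case z of (k, j) \<Rightarrow> \<alpha> k * ?F j (n + k)) \<le> (case z of (k, j) \<Rightarrow> norm (\<alpha> k) * (C / 2^j))" for z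
      using mult_left_mono[OF norm_neumann_term_le[OF t] norm_ge_zero]
      by (cases z) (simp add: norm_mult)
  qed
  have "(\<Sum>\<^sub>\<infinity>k. \<alpha> k * neumann_sum h (n + k) t) = (\<Sum>\<^sub>\<infinity>k. \<Sum>\<^sub>\<infinity>j. \<alpha> k * ?F j (n + k))"
    unfolding neumann_sum_def by (intro infsum_cong infsum_cmult_right[symmetric] summable_neumann_term[OF t])
  also have "\<dots> = (\<Sum>\<^sub>\<infinity>j. \<Sum>\<^sub>\<infinity>k. \<alpha> k * ?F j (n + k))"
    by (rule infsum_swap_banach) (use product in simp)
  finally have "tail_op t (\<lambda>m. neumann_sum h m t) n
      = - (4 * pi / \<sigma> n t) * (\<Sum>\<^sub>\<infinity>j. \<Sum>\<^sub>\<infinity>k. \<alpha> k * ?F j (n + k))"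
    using n by (simp add: tail_op_def)
  also have "\<dots> = (\<Sum>\<^sub>\<infinity>j. - (4 * pi / \<sigma> n t) * (\<Sum>\<^sub>\<infinity>k. \<alpha> k * ?F j (n + k)))"
    by (rule infsum_cmult_right'[symmetric])
  also have "\<dots> = (\<Sum>\<^sub>\<infinity>j. ?F (Suc j) n)" using n by (simp add: tail_op_def)
  also have "\<dots> = neumann_sum h n t - h n t"
    unfolding neumann_sum_def using infsum_shift_Suc[OF summable_neumann_term[OF t]] n by simp
  finally show ?thesis by simp
qed

lemma l2_bounded_neumann_sum:
  assumes t: "t \<in> ball 0 r0" and l2: "l2_bounded (\<lambda>n. h n t) B"
  shows "l2_bounded (\<lambda>n. neumann_sum h n t) (2 * B)"
proof (rule l2_bounded_limit)
  have terms: "l2_bounded (\<lambda>n. neumann_term h j n t) (B / 2^j)" for j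
  proof (induction j)
    case 0
    show ?case using l2_bounded_scale[OF _ _ l2, of "\<lambda>n. neumann_term h 0 n t" 1] by simp
  next
    case (Suc j)
    show ?case using l2_bounded_tail_op[OF t Suc] by (simp add: mult.commute)
  qed
  have B: "B \<ge> 0" by (rule l2_bounded_nonneg[OF l2])
  show "l2_bounded (\<lambda>n. \<Sum>j<J. neumann_term h j n t) (2 * B)" for J
  proof (rule l2_bounded_mono[OF l2_bounded_sum[OF _ terms]])
    show "(\<Sum>j<J. B / 2^j) \<le> 2 * B"
      using finite_sum_le_infsum[of "\<lambda>j. B / 2^j" UNIV "{..<J}"] has_sum_geometric_half[OF B] B
      by (simp add: has_sum_iff)
  qed simp
  show "(\<lambda>J. \<Sum>j<J. neumann_term h j n t) \<longlonglongrightarrow> neumann_sum h n t" for n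
    using has_sum_imp_sums[of "\<lambda>j. neumann_term h j n t"] summable_neumann_term[OF t]
    by (simp add: neumann_sum_def sums_def summable_iff_has_sum_infsum)
qed

lemma holomorphic_neumann_sum:
  assumes hol: "\<And>n. h n holomorphic_on ball 0 r0"
  shows "neumann_sum h n holomorphic_on ball 0 r0"
proof -
  have "neumann_term h j n holomorphic_on ball 0 r0" for j n
  proof (induction j arbitrary: n)
    case 0
    then show ?case by (cases "N \<le> \<bar>n\<bar>") (simp_all add: hol)
  next
    case (Suc j)
    then show ?case using holomorphic_tail_op[OF Suc norm_neumann_term_le] by simp
  qed
  then show ?thesis
    unfolding neumann_sum_def[abs_def]
    using has_sum_geometric_half[OF C] norm_neumann_term_le C
    by (intro holomorphic_on_infsum[where M = "\<lambda>j. C / 2^j"]) (auto simp: has_sum_iff)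
qed

end

section \<open>Reduction to the head equations\<close>

definition head :: "int set" where "head = {n. \<bar>n\<bar> < N}"

lemma finite_head: "finite head"
proof -
  have "head = {-N<..<N}" unfolding head_def by auto
  then show ?thesis by simp
qed

lemma in_head_iff: "n \<in> head \<longleftrightarrow> \<not> N \<le> \<bar>n\<bar>"
  unfolding head_def by auto

definition inhom_coeff :: complex where "inhom_coeff = 2 * \<i> * of_real (sqrt (2 * pi))"

text \<open>A unit value at head position \<open>m\<close> enters the \<open>n\<close>-th convolution sum with weight \<open>\<alpha>(m - n)\<close>;
  \<open>unit_source m\<close> is the resulting forcing of the tail equations.\<close>
definition unit_source :: "int \<Rightarrow> int \<Rightarrow> complex \<Rightarrow> complex" where
  "unit_source m n t = (if N \<le> \<bar>n\<bar> then - (4 * pi / \<sigma> n t) * \<alpha> (m - n) else 0)"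

definition inhom_source :: "int \<Rightarrow> complex \<Rightarrow> complex" where
  "inhom_source n t = (if N \<le> \<bar>n\<bar> then - inhom_coeff / (\<sigma> n t * (1 + \<sigma> n t)) else 0)"

abbreviation unit_response :: "int \<Rightarrow> int \<Rightarrow> complex \<Rightarrow> complex" where
  "unit_response m \<equiv> neumann_sum (unit_source m)"

abbreviation inhom_response :: "int \<Rightarrow> complex \<Rightarrow> complex" where
  "inhom_response \<equiv> neumann_sum inhom_source"

lemma norm_unit_source_le:
  assumes t: "t \<in> ball 0 r0"
  shows "norm (unit_source m n t) \<le> norm (\<alpha> (m - n))"
proof (cases "N \<le> \<bar>n\<bar>")
  case True
  have "1 / (2 * (alpha_l1 + 1)) \<le> 1" using alpha_l1_nonneg by simp
  then have "4 * pi / norm (\<sigma> n t) \<le> 1" using tail_coeff_small(1)[OF t True] by linarith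
  then have "4 * pi / norm (\<sigma> n t) * norm (\<alpha> (m - n)) \<le> norm (\<alpha> (m - n))"
    using mult_right_mono[of "4 * pi / norm (\<sigma> n t)" 1 "norm (\<alpha> (m - n))"] by simp
  then show ?thesis using True by (simp add: unit_source_def norm_mult norm_divide)
qed (simp add: unit_source_def)

lemma norm_inhom_source_le:
  assumes t: "t \<in> ball 0 r0"
  shows "norm (inhom_source n t) \<le> sqrt (2 * pi)"
proof (cases "N \<le> \<bar>n\<bar>")
  case True
  have two: "2 \<le> norm (\<sigma> n t)" by (rule tail_coeff_small(2)[OF t True])
  then have "1 \<le> norm (1 + \<sigma> n t)" using norm_triangle_ineq4[of "1 + \<sigma> n t" 1] by simp
  then have "2 * 1 \<le> norm (\<sigma> n t) * norm (1 + \<sigma> n t)" using two by (intro mult_mono) auto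
  then have "2 * sqrt (2 * pi) / (norm (\<sigma> n t) * norm (1 + \<sigma> n t)) \<le> 2 * sqrt (2 * pi) / 2"
    by (intro divide_left_mono) auto
  then show ?thesis using True by (simp add: inhom_source_def inhom_coeff_def norm_mult norm_divide)
qed (simp add: inhom_source_def)

lemma holomorphic_unit_source: "unit_source m n holomorphic_on ball 0 r0"
proof (cases "N \<le> \<bar>n\<bar>")
  case True
  then have "unit_source m n = (\<lambda>t. - (4 * pi / \<sigma> n t) * \<alpha> (m - n))"
    by (simp add: unit_source_def[abs_def])
  moreover have "(\<lambda>t. - (4 * pi / \<sigma> n t) * \<alpha> (m - n)) holomorphic_on ball 0 r0"
    by (intro holomorphic_intros holomorphic_branch_root) (use tail_coeff_small(3) True in auto)
  ultimately show ?thesis by simp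
qed (simp add: unit_source_def[abs_def])

lemma holomorphic_inhom_source: "inhom_source n holomorphic_on ball 0 r0"
proof (cases "N \<le> \<bar>n\<bar>")
  case True
  then have "inhom_source n = (\<lambda>t. - inhom_coeff / (\<sigma> n t * (1 + \<sigma> n t)))"
    by (simp add: inhom_source_def[abs_def])
  moreover have "(\<lambda>t. - inhom_coeff / (\<sigma> n t * (1 + \<sigma> n t))) holomorphic_on ball 0 r0"
    by (intro holomorphic_intros holomorphic_branch_root)
       (use tail_coeff_small(3) True one_plus_branch_root_nonzero in auto)
  ultimately show ?thesis by simp
qed (simp add: inhom_source_def[abs_def])

lemma unit_source_bound: "t \<in> ball 0 r0 \<Longrightarrow> norm (unit_source m n t) \<le> alpha_l1"
  using norm_unit_source_le norm_alpha_le order_trans by blast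

lemma norm_unit_response_le: "t \<in> ball 0 r0 \<Longrightarrow> norm (unit_response m n t) \<le> 2 * alpha_l1"
  by (rule norm_neumann_sum_le[where h = "unit_source m" and C = alpha_l1]) (simp_all add: unit_source_bound alpha_l1_nonneg)

lemma norm_inhom_response_le: "t \<in> ball 0 r0 \<Longrightarrow> norm (inhom_response n t) \<le> 2 * sqrt (2 * pi)"
  by (rule norm_neumann_sum_le[where h = inhom_source and C = "sqrt (2 * pi)"]) (simp_all add: norm_inhom_source_le)

lemma holomorphic_unit_response: "unit_response m n holomorphic_on ball 0 r0"
  by (rule holomorphic_neumann_sum[where h = "unit_source m" and C = alpha_l1])
     (simp_all add: unit_source_bound alpha_l1_nonneg holomorphic_unit_source)

lemma holomorphic_inhom_response: "inhom_response n holomorphic_on ball 0 r0"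
  by (rule holomorphic_neumann_sum[where h = inhom_source and C = "sqrt (2 * pi)"])
     (simp_all add: norm_inhom_source_le holomorphic_inhom_source)

lemma l2_bounded_unit_response:
  assumes t: "t \<in> ball 0 r0"
  shows "l2_bounded (\<lambda>n. unit_response m n t) (2 * alpha_l1)"
proof (rule l2_bounded_neumann_sum[where h = "unit_source m" and C = alpha_l1])
  have "l2_bounded (\<lambda>n. unit_source m n t) (1 * alpha_l1)"
    by (rule l2_bounded_scale[OF _ _ l2_bounded_reflection[OF alpha_summable, of m, folded alpha_l1_def]])
       (simp_all add: norm_unit_source_le[OF t])
  then show "l2_bounded (\<lambda>n. unit_source m n t) alpha_l1" by simp
qed (use t in \<open>simp_all add: unit_source_bound alpha_l1_nonneg\<close>)

definition tail_part :: "(int \<Rightarrow> complex) \<Rightarrow> complex \<Rightarrow> int \<Rightarrow> complex \<Rightarrow> complex" where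
  "tail_part x s n t = s * inhom_response n t + (\<Sum>m\<in>head. x m * unit_response m n t)"

text \<open>For head values \<open>x\<close>, \<open>extension x 1 t\<close> is the bounded solution of the tail equations of the
  system at \<open>t\<close> (and \<open>extension x 0 t\<close> that of the homogeneous system) which agrees with \<open>x\<close> on
  the head.\<close>
definition extension :: "(int \<Rightarrow> complex) \<Rightarrow> complex \<Rightarrow> int \<Rightarrow> complex \<Rightarrow> complex" where
  "extension x s n t = (if n \<in> head then x n else tail_part x s n t)"

lemma tail_part_head: "n \<in> head \<Longrightarrow> tail_part x s n t = 0"
  by (simp add: tail_part_def in_head_iff neumann_sum_head)

lemma norm_head_combination_le:
  assumes t: "t \<in> ball 0 r0"
  shows "norm (\<Sum>m\<in>head. x m * unit_response m n t) \<le> (\<Sum>m\<in>head. norm (x m) * (2 * alpha_l1))"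
  by (rule order_trans[OF norm_sum sum_mono])
     (simp add: norm_mult mult_left_mono norm_unit_response_le[OF t])

lemma norm_tail_part_le:
  assumes t: "t \<in> ball 0 r0"
  shows "norm (tail_part x s n t) \<le> norm s * (2 * sqrt (2 * pi)) + (\<Sum>m\<in>head. norm (x m) * (2 * alpha_l1))"
proof -
  have "norm (s * inhom_response n t) \<le> norm s * (2 * sqrt (2 * pi))"
    by (simp add: norm_mult mult_left_mono norm_inhom_response_le[OF t])
  then show ?thesis
    unfolding tail_part_def
    using norm_head_combination_le[OF t, of x n]
      norm_triangle_ineq[of "s * inhom_response n t" "\<Sum>m\<in>head. x m * unit_response m n t"] by linarith
qed

lemma tail_part_fixed_point:
  assumes t: "t \<in> ball 0 r0" and n: "N \<le> \<bar>n\<bar>"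
  shows "tail_part x s n t
    = tail_op t (\<lambda>j. tail_part x s j t) n + (s * inhom_source n t + (\<Sum>m\<in>head. x m * unit_source m n t))"
proof -
  have "tail_op t (\<lambda>j. tail_part x s j t) n
      = tail_op t (\<lambda>j. s * inhom_response j t) n + tail_op t (\<lambda>j. \<Sum>m\<in>head. x m * unit_response m j t) n"
    unfolding tail_part_def
  proof (rule tail_op_add)
    show "norm (s * inhom_response j t) \<le> norm s * (2 * sqrt (2 * pi))" for j
      by (simp add: norm_mult mult_left_mono norm_inhom_response_le[OF t])
    show "norm (\<Sum>m\<in>head. x m * unit_response m j t) \<le> (\<Sum>m\<in>head. norm (x m) * (2 * alpha_l1))" for j
      by (rule norm_head_combination_le[OF t])
  qed
  also have "\<dots> = s * tail_op t (\<lambda>j. inhom_response j t) n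
      + (\<Sum>m\<in>head. x m * tail_op t (\<lambda>j. unit_response m j t) n)"
    using tail_op_sum[where u = "\<lambda>m j. unit_response m j t" and c = x and C = "2 * alpha_l1", OF finite_head]
    by (simp add: tail_op_cmult norm_unit_response_le[OF t])
  finally have K: "tail_op t (\<lambda>j. tail_part x s j t) n = \<dots>" .
  have unit: "unit_response m n t = tail_op t (\<lambda>j. unit_response m j t) n + unit_source m n t" for m
    by (rule neumann_sum_fixed_point[where h = "unit_source m" and C = alpha_l1]) (use t n in \<open>simp_all add: unit_source_bound alpha_l1_nonneg\<close>)
  have inhom: "inhom_response n t = tail_op t (\<lambda>j. inhom_response j t) n + inhom_source n t"
    by (rule neumann_sum_fixed_point[where h = inhom_source and C = "sqrt (2 * pi)"]) (use t n in \<open>simp_all add: norm_inhom_source_le\<close>)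
  have "tail_part x s n t = s * (tail_op t (\<lambda>j. inhom_response j t) n + inhom_source n t)
      + (\<Sum>m\<in>head. x m * (tail_op t (\<lambda>j. unit_response m j t) n + unit_source m n t))"
    unfolding tail_part_def by (subst inhom, subst unit) (rule refl)
  then show ?thesis unfolding K by (simp add: algebra_simps sum.distrib)
qed

lemma conv_head_tail_split:
  assumes q: "\<And>m. norm (q m) \<le> C"
  shows "(\<Sum>\<^sub>\<infinity>k. \<alpha> k * q (n + k)) =
         (\<Sum>\<^sub>\<infinity>k. \<alpha> k * (if N \<le> \<bar>n + k\<bar> then q (n + k) else 0)) + (\<Sum>m\<in>head. \<alpha> (m - n) * q m)"
proof -
  let ?u = "\<lambda>j. if N \<le> \<bar>j\<bar> then q j else 0"
  let ?w = "\<lambda>j. if N \<le> \<bar>j\<bar> then 0 else q j"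
  have C0: "C \<ge> 0" using q[of 0] norm_ge_zero order_trans by blast
  have bounds: "norm (?u j) \<le> C" "norm (?w j) \<le> C" for j using q[of j] C0 by auto
  have "(\<Sum>\<^sub>\<infinity>k. \<alpha> k * q (n + k)) = (\<Sum>\<^sub>\<infinity>k. \<alpha> k * ?u (n + k) + \<alpha> k * ?w (n + k))"
    by (intro infsum_cong) (simp add: distrib_left[symmetric])
  also have "\<dots> = (\<Sum>\<^sub>\<infinity>k. \<alpha> k * ?u (n + k)) + (\<Sum>\<^sub>\<infinity>k. \<alpha> k * ?w (n + k))"
    by (rule infsum_add; rule summable_on_conv[OF alpha_summable]) (use bounds in blast)+
  also have "(\<Sum>\<^sub>\<infinity>k. \<alpha> k * ?w (n + k)) = (\<Sum>\<^sub>\<infinity>m. \<alpha> (m - n) * ?w m)"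
    using infsum_int_shift[of "\<lambda>m. \<alpha> (m - n) * ?w m" n] by simp
  also have "\<dots> = (\<Sum>m\<in>head. \<alpha> (m - n) * q m)"
    by (subst infsum_finite_support[OF finite_head]) (auto simp: in_head_iff intro!: sum.cong)
  finally show ?thesis .
qed

lemma norm_extension_le:
  assumes t: "t \<in> ball 0 r0"
  shows "norm (extension x s j t)
    \<le> (\<Sum>m\<in>head. norm (x m)) + (norm s * (2 * sqrt (2 * pi)) + (\<Sum>m\<in>head. norm (x m) * (2 * alpha_l1)))"
    (is "_ \<le> ?H + ?T")
proof (cases "j \<in> head")
  case True
  have "?T \<ge> 0" using alpha_l1_nonneg by (intro add_nonneg_nonneg sum_nonneg) auto
  moreover have "norm (x j) \<le> ?H" using member_le_sum[OF True _ finite_head, of "\<lambda>m. norm (x m)"] by simp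
  ultimately show ?thesis using True by (simp add: extension_def)
next
  case False
  have "?H \<ge> 0" by (simp add: sum_nonneg)
  then show ?thesis using False norm_tail_part_le[OF t, of x s j] by (simp add: extension_def)
qed

lemma conv_extension:
  assumes t: "t \<in> ball 0 r0"
  shows "(\<Sum>\<^sub>\<infinity>k. \<alpha> k * extension x s (n + k) t)
    = (\<Sum>\<^sub>\<infinity>k. \<alpha> k * tail_part x s (n + k) t) + (\<Sum>m\<in>head. \<alpha> (m - n) * x m)"
proof -
  have tail: "(if N \<le> \<bar>j\<bar> then extension x s j t else 0) = tail_part x s j t" for j
    by (cases "N \<le> \<bar>j\<bar>") (simp_all add: extension_def in_head_iff tail_part_head)
  have head: "(\<Sum>m\<in>head. \<alpha> (m - n) * extension x s m t) = (\<Sum>m\<in>head. \<alpha> (m - n) * x m)"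
    by (simp add: extension_def)
  show ?thesis
    using conv_head_tail_split[where q = "\<lambda>j. extension x s j t", OF norm_extension_le[OF t]]
    by (simp only: tail head)
qed

lemma extension_tail_equation:
  assumes t: "t \<in> ball 0 r0" and n: "N \<le> \<bar>n\<bar>"
  shows "extension x s n t = - (4 * pi / \<sigma> n t) * (\<Sum>\<^sub>\<infinity>k. \<alpha> k * extension x s (n + k) t)
            - s * inhom_coeff / (\<sigma> n t * (1 + \<sigma> n t))"
proof -
  define T H where "T = (\<Sum>\<^sub>\<infinity>k. \<alpha> k * tail_part x s (n + k) t)" and "H = (\<Sum>m\<in>head. \<alpha> (m - n) * x m)"
  have "(\<Sum>m\<in>head. x m * unit_source m n t) = (\<Sum>m\<in>head. - (4 * pi / \<sigma> n t) * (\<alpha> (m - n) * x m))"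
    using n by (intro sum.cong) (simp_all add: unit_source_def)
  also have "\<dots> = - (4 * pi / \<sigma> n t) * H" unfolding H_def by (rule sum_distrib_left[symmetric])
  finally have "extension x s n t
      = - (4 * pi / \<sigma> n t) * T + (s * (- inhom_coeff / (\<sigma> n t * (1 + \<sigma> n t))) + - (4 * pi / \<sigma> n t) * H)"
    using n tail_part_fixed_point[OF t n, of x s]
    by (simp add: extension_def in_head_iff tail_op_def inhom_source_def T_def)
  moreover have "(\<Sum>\<^sub>\<infinity>k. \<alpha> k * extension x s (n + k) t) = T + H"
    unfolding T_def H_def by (rule conv_extension[OF t])
  moreover define z D where "z = 4 * pi / \<sigma> n t" and "D = \<sigma> n t * (1 + \<sigma> n t)"
  ultimately show ?thesis unfolding z_def[symmetric] D_def[symmetric] by (simp add: algebra_simps)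
qed

text \<open>Row \<open>n\<close> of the system, multiplied by \<open>\<sigma> n t\<close>, after the tail has been eliminated.\<close>
definition head_matrix :: "int \<Rightarrow> int \<Rightarrow> complex \<Rightarrow> complex" where
  "head_matrix n m t = (if n = m then \<sigma> n t else 0) + 4 * pi * \<alpha> (m - n)
     + 4 * pi * (\<Sum>\<^sub>\<infinity>k. \<alpha> k * unit_response m (n + k) t)"

definition head_rhs :: "int \<Rightarrow> complex \<Rightarrow> complex" where
  "head_rhs n t = - inhom_coeff / (1 + \<sigma> n t) - 4 * pi * (\<Sum>\<^sub>\<infinity>k. \<alpha> k * inhom_response (n + k) t)"

lemma conv_tail_part:
  assumes t: "t \<in> ball 0 r0"
  shows "(\<Sum>\<^sub>\<infinity>k. \<alpha> k * tail_part x s (n + k) t)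
    = s * (\<Sum>\<^sub>\<infinity>k. \<alpha> k * inhom_response (n + k) t) + (\<Sum>m\<in>head. x m * (\<Sum>\<^sub>\<infinity>k. \<alpha> k * unit_response m (n + k) t))"
proof -
  have unit: "(\<lambda>k. x m * (\<alpha> k * unit_response m (n + k) t)) summable_on UNIV" for m
    by (intro summable_on_cmult_right summable_on_conv[OF alpha_summable norm_unit_response_le[OF t]])
  have inhom: "(\<lambda>k. s * (\<alpha> k * inhom_response (n + k) t)) summable_on UNIV"
    by (intro summable_on_cmult_right summable_on_conv[OF alpha_summable norm_inhom_response_le[OF t]])
  have "(\<Sum>\<^sub>\<infinity>k. \<alpha> k * tail_part x s (n + k) t)
      = (\<Sum>\<^sub>\<infinity>k. s * (\<alpha> k * inhom_response (n + k) t) + (\<Sum>m\<in>head. x m * (\<alpha> k * unit_response m (n + k) t)))"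
    unfolding tail_part_def by (intro infsum_cong) (simp add: algebra_simps sum_distrib_left)
  also have "\<dots> = s * (\<Sum>\<^sub>\<infinity>k. \<alpha> k * inhom_response (n + k) t)
      + (\<Sum>m\<in>head. x m * (\<Sum>\<^sub>\<infinity>k. \<alpha> k * unit_response m (n + k) t))"
    using infsum_add[OF inhom summable_on_sum[OF finite_head unit]] infsum_sum[OF finite_head unit]
    by (simp add: infsum_cmult_right')
  finally show ?thesis .
qed

lemma head_row_identity:
  assumes t: "t \<in> ball 0 r0" and n: "n \<in> head"
  shows "(\<Sum>m\<in>head. head_matrix n m t * x m) - s * head_rhs n t
    = \<sigma> n t * x n + 4 * pi * (\<Sum>\<^sub>\<infinity>k. \<alpha> k * extension x s (n + k) t) + s * inhom_coeff / (1 + \<sigma> n t)"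
proof -
  define A0 where "A0 = (\<Sum>\<^sub>\<infinity>k. \<alpha> k * inhom_response (n + k) t)"
  define A where "A m = (\<Sum>\<^sub>\<infinity>k. \<alpha> k * unit_response m (n + k) t)" for m
  define S where "S = (\<Sum>\<^sub>\<infinity>k. \<alpha> k * extension x s (n + k) t)"
  have S: "S = s * A0 + (\<Sum>m\<in>head. x m * A m) + (\<Sum>m\<in>head. \<alpha> (m - n) * x m)"
    unfolding S_def A0_def A_def by (simp only: conv_extension[OF t] conv_tail_part[OF t])
  have "(\<Sum>m\<in>head. head_matrix n m t * x m)
      = (\<Sum>m\<in>head. (if n = m then \<sigma> n t * x m else 0)) + (\<Sum>m\<in>head. 4 * pi * (\<alpha> (m - n) * x m))
        + (\<Sum>m\<in>head. 4 * pi * (x m * A m))"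
    unfolding head_matrix_def A_def sum.distrib[symmetric] by (intro sum.cong) (auto simp: algebra_simps)
  also have "(\<Sum>m\<in>head. (if n = m then \<sigma> n t * x m else 0)) = \<sigma> n t * x n"
    using n finite_head by (simp add: sum.delta)
  finally show ?thesis
    unfolding head_rhs_def A0_def[symmetric] S_def[symmetric] S
    by (simp add: algebra_simps sum_distrib_left)
qed

lemma bounded_solution_eq_extension:
  assumes t: "t \<in> ball 0 r0" and nonzero: "\<And>n. \<sigma> n t \<noteq> 0" and q: "\<And>m. norm (q m) \<le> C"
    and eq: "\<And>n. q n = - (4 * pi / \<sigma> n t) * (\<Sum>\<^sub>\<infinity>k. \<alpha> k * q (n + k))
                        - inhom_coeff / (\<sigma> n t * (1 + \<sigma> n t))"
  shows "q n = extension q 1 n t"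
proof -
  define w where "w j = q j - extension q 1 j t" for j
  obtain B where B: "\<And>j. norm (extension q 1 j t) \<le> B" using norm_extension_le[OF t] by blast
  have w_bound: "norm (w j) \<le> C + B" for j
    using norm_triangle_ineq4[of "q j" "extension q 1 j t"] q[of j] B[of j] unfolding w_def by linarith
  have "w n = 0"
  proof (rule tail_fixed_point_unique[OF t w_bound])
    show "w m = 0" if "\<not> N \<le> \<bar>m\<bar>" for m using that by (simp add: w_def extension_def in_head_iff)
    show "w m = tail_op t w m" if m: "N \<le> \<bar>m\<bar>" for m
    proof -
      have "(\<Sum>\<^sub>\<infinity>k. \<alpha> k * w (m + k))
          = (\<Sum>\<^sub>\<infinity>k. \<alpha> k * q (m + k)) - (\<Sum>\<^sub>\<infinity>k. \<alpha> k * extension q 1 (m + k) t)"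
        unfolding w_def right_diff_distrib
        by (rule infsum_diff; rule summable_on_conv[OF alpha_summable]) (use q B in blast)+
      then show ?thesis
        using eq[of m] extension_tail_equation[OF t m, of q 1] m
        by (simp add: w_def tail_op_def right_diff_distrib)
    qed
  qed
  then show ?thesis by (simp add: w_def)
qed

lemma head_rows_of_solution:
  assumes t: "t \<in> ball 0 r0" and nonzero: "\<And>n. \<sigma> n t \<noteq> 0" and q: "\<And>m. norm (q m) \<le> C"
    and eq: "\<And>n. q n = - (4 * pi / \<sigma> n t) * (\<Sum>\<^sub>\<infinity>k. \<alpha> k * q (n + k))
                        - inhom_coeff / (\<sigma> n t * (1 + \<sigma> n t))"
    and n: "n \<in> head"
  shows "(\<Sum>m\<in>head. head_matrix n m t * q m) = head_rhs n t"
proof -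
  define S where "S = (\<Sum>\<^sub>\<infinity>k. \<alpha> k * q (n + k))"
  have "extension q 1 j t = q j" for j
    by (rule bounded_solution_eq_extension[OF t nonzero q eq, symmetric])
  then have "(\<Sum>m\<in>head. head_matrix n m t * q m) - head_rhs n t
      = \<sigma> n t * q n + 4 * pi * S + inhom_coeff / (1 + \<sigma> n t)"
    using head_row_identity[OF t n, of q 1] by (simp add: S_def)
  also have "\<sigma> n t * q n = \<sigma> n t * (- (4 * pi / \<sigma> n t) * S) - \<sigma> n t * (inhom_coeff / (\<sigma> n t * (1 + \<sigma> n t)))"
    unfolding S_def by (subst eq[of n]) (simp only: right_diff_distrib)
  also have "\<dots> = - (4 * pi) * S - inhom_coeff / (1 + \<sigma> n t)" using nonzero[of n] by simp
  finally show ?thesis by simp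
qed

end

section \<open>Invertibility of the head system at \<open>t = 0\<close>\<close>

lemma summable_on_conv_form:
  fixes \<alpha> q :: "int \<Rightarrow> complex"
  assumes \<alpha>: "(\<lambda>k. norm (\<alpha> k)) summable_on UNIV" and q: "(\<lambda>n. (norm (q n))^2) summable_on UNIV"
  shows "(\<lambda>(n, k). cnj (q n) * (\<alpha> k * q (n + k))) summable_on UNIV"
proof -
  define G1 G2 where "G1 = (\<lambda>(n::int, k::int). (norm (q n))^2 * norm (\<alpha> k))"
    and "G2 = (\<lambda>(n::int, k::int). (norm (q (n + k)))^2 * norm (\<alpha> k))"
  have G1: "G1 summable_on UNIV" unfolding G1_def by (rule summable_on_product_nonneg[OF q \<alpha>]) auto
  have "G2 summable_on UNIV \<longleftrightarrow> G1 summable_on UNIV"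
    by (rule summable_on_reindex_bij_witness[where j = "\<lambda>(n, k). (n + k, k)" and i = "\<lambda>(n, k). (n - k, k)"])
       (auto simp: G1_def G2_def)
  with G1 have G2: "G2 summable_on UNIV" by simp
  show ?thesis
  proof (rule summable_on_norm_bound(1)[OF summable_on_add[OF G1 G2]])
    fix z :: "int \<times> int"
    obtain n k where z: "z = (n, k)" by (cases z)
    have "0 \<le> (norm (q n) - norm (q (n + k)))^2" by simp
    then have "2 * (norm (q n) * norm (q (n + k))) \<le> (norm (q n))^2 + (norm (q (n + k)))^2"
      by (simp add: power2_eq_square algebra_simps)
    moreover have "0 \<le> norm (q n) * norm (q (n + k))" by simp
    ultimately have am_gm: "norm (q n) * norm (q (n + k)) \<le> (norm (q n))^2 + (norm (q (n + k)))^2"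
      by linarith
    then show "norm (case z of (n, k) \<Rightarrow> cnj (q n) * (\<alpha> k * q (n + k))) \<le> G1 z + G2 z"
      using z mult_left_mono[OF am_gm norm_ge_zero[of "\<alpha> k"]]
      by (simp add: G1_def G2_def norm_mult algebra_simps)
  qed
qed

text \<open>The substitution \<open>(n, k) \<mapsto> (n + k, -k)\<close> turns the quadratic form into its complex conjugate.\<close>
lemma hermitian_conv_form_real:
  fixes \<alpha> q :: "int \<Rightarrow> complex"
  assumes \<alpha>: "(\<lambda>k. norm (\<alpha> k)) summable_on UNIV" and herm: "\<And>n. \<alpha> n = cnj (\<alpha> (- n))"
    and q: "l2_bounded q B"
  shows "(\<lambda>n. cnj (q n) * (\<Sum>\<^sub>\<infinity>k. \<alpha> k * q (n + k))) summable_on UNIV"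
    and "Im (\<Sum>\<^sub>\<infinity>n. cnj (q n) * (\<Sum>\<^sub>\<infinity>k. \<alpha> k * q (n + k))) = 0"
proof -
  define P where "P = (\<lambda>(n, k). cnj (q n) * (\<alpha> k * q (n + k)))"
  have P: "P summable_on UNIV" unfolding P_def by (rule summable_on_conv_form[OF \<alpha> l2_bounded_summable_sq[OF q]])
  have inner: "(\<lambda>n. cnj (q n) * (\<Sum>\<^sub>\<infinity>k. \<alpha> k * q (n + k))) = (\<lambda>n. \<Sum>\<^sub>\<infinity>k. P (n, k))"
    by (simp add: P_def infsum_cmult_right')
  show "(\<lambda>n. cnj (q n) * (\<Sum>\<^sub>\<infinity>k. \<alpha> k * q (n + k))) summable_on UNIV"
    unfolding inner by (rule summable_on_Sigma_banach) (use P in simp)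
  have "(\<Sum>\<^sub>\<infinity>n. cnj (q n) * (\<Sum>\<^sub>\<infinity>k. \<alpha> k * q (n + k))) = infsum P (Sigma UNIV (\<lambda>_. UNIV))"
    unfolding inner by (rule infsum_Sigma_banach) (use P in simp)
  moreover have "cnj (infsum P UNIV) = infsum P UNIV"
  proof -
    have "cnj (infsum P UNIV) = (\<Sum>\<^sub>\<infinity>z. cnj (P z))" by simp
    also have "\<dots> = infsum P UNIV"
    proof (rule infsum_reindex_bij_witness[where j = "\<lambda>(n, k). (n + k, - k)" and i = "\<lambda>(n, k). (n + k, - k)"])
      fix z :: "int \<times> int"
      obtain n k where z: "z = (n, k)" by (cases z)
      have "cnj (\<alpha> k) = \<alpha> (- k)" using herm[of "- k"] by simp
      then show "P (case z of (n, k) \<Rightarrow> (n + k, - k)) = cnj (P z)"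
        using z by (simp add: P_def mult.commute mult.left_commute)
    qed auto
    finally show ?thesis .
  qed
  then have "Im (infsum P UNIV) = 0" by (simp only: complex_is_Real_iff[symmetric] Reals_cnj_iff)
  ultimately show "Im (\<Sum>\<^sub>\<infinity>n. cnj (q n) * (\<Sum>\<^sub>\<infinity>k. \<alpha> k * q (n + k))) = 0" by simp
qed

locale generic_tail_contraction = tail_contraction +
  assumes hermitian: "\<And>n. \<alpha> n = cnj (\<alpha> (- n))" and generic: "generic \<alpha>"
begin

lemma Im_branch_root_0:
  shows "Im (\<sigma> n 0) \<ge> 0" and "n < 0 \<Longrightarrow> Im (\<sigma> n 0) > 0"
proof -
  have "Im (\<sigma> n 0) = (if n < 0 then sqrt (\<omega> * of_int (- n)) else 0)"
  proof (cases n "0::int" rule: linorder_cases)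
    case less
    have "\<sigma> n 0 = \<i> * csqrt (of_real (\<omega> * of_int (- n)))" by (simp add: branch_root_neg less)
    also have "\<dots> = \<i> * of_real (sqrt (\<omega> * of_int (- n)))"
      by (subst csqrt_of_real) (use less mult_pos_neg[OF omega_pos, of "of_int n"] in simp_all)
    finally show ?thesis using less by simp
  next
    case greater
    have "\<sigma> n 0 = csqrt (of_real (\<omega> * of_int n))" by (simp add: branch_root_pos greater)
    also have "\<dots> = of_real (sqrt (\<omega> * of_int n))"
      by (subst csqrt_of_real) (use greater omega_pos in simp_all)
    finally show ?thesis using greater by simp
  qed simp
  moreover have "n < 0 \<Longrightarrow> 0 < \<omega> * of_int (- n)" by (intro mult_pos_pos omega_pos) simp
  ultimately show "Im (\<sigma> n 0) \<ge> 0" and "n < 0 \<Longrightarrow> Im (\<sigma> n 0) > 0"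
    by (cases "n < 0"; simp del: of_int_minus mult_minus_right)+
qed

text \<open>Pairing the homogeneous equation with \<open>q\<close>, the convolution part is real, so
  \<open>\<Sum>\<^sub>n Im (\<sigma> n 0) \<bar>q\<^sub>n\<bar>\<^sup>2 = 0\<close>; all terms are nonnegative and \<open>Im (\<sigma> n 0) > 0\<close> for \<open>n < 0\<close>.\<close>
lemma homogeneous_solution_vanishes_on_negatives:
  assumes q: "l2_bounded q B"
    and hom: "\<And>n. \<sigma> n 0 * q n + 4 * pi * (\<Sum>\<^sub>\<infinity>k. \<alpha> k * q (n + k)) = 0"
    and n: "n < 0"
  shows "q n = 0"
proof -
  define F where "F n = - 4 * pi * (cnj (q n) * (\<Sum>\<^sub>\<infinity>k. \<alpha> k * q (n + k)))" for n
  have F_summable: "F summable_on UNIV"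
    unfolding F_def by (rule summable_on_cmult_right[OF hermitian_conv_form_real(1)[OF alpha_summable hermitian q]])
  have F_real: "Im (infsum F UNIV) = 0"
    unfolding F_def infsum_cmult_right' using hermitian_conv_form_real(2)[OF alpha_summable hermitian q] by simp
  have Im_F: "Im (F n) = Im (\<sigma> n 0) * (norm (q n))^2" for n
  proof -
    have S: "4 * pi * (\<Sum>\<^sub>\<infinity>k. \<alpha> k * q (n + k)) = - (\<sigma> n 0 * q n)"
      using hom[of n] by (simp only: add_eq_0_iff)
    have "F n = cnj (q n) * (- (4 * pi * (\<Sum>\<^sub>\<infinity>k. \<alpha> k * q (n + k))))"
      by (simp add: F_def)
    also have "\<dots> = cnj (q n) * (\<sigma> n 0 * q n)" by (simp only: S minus_minus)
    also have "\<dots> = \<sigma> n 0 * of_real ((norm (q n))^2)"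
      using complex_norm_square[of "q n"] by (simp add: mult.commute mult.left_commute)
    finally show ?thesis by simp
  qed
  have "(\<lambda>n. Im (F n)) summable_on UNIV" "(\<Sum>\<^sub>\<infinity>n. Im (F n)) = 0"
    using summable_on_Im[OF F_summable] infsum_Im[OF F_summable] F_real by simp_all
  then have "Im (F n) = 0"
    by (intro nonneg_infsum_le_0D[of "\<lambda>n. Im (F n)" UNIV]) (simp_all add: Im_F Im_branch_root_0(1))
  then show ?thesis using Im_branch_root_0(2)[OF n] by (simp add: Im_F)
qed

lemma l2_bounded_homogeneous_extension:
  assumes t: "t \<in> ball 0 r0"
  shows "l2_bounded (\<lambda>n. extension x 0 n t) ((\<Sum>n\<in>head. norm (x n)) + (\<Sum>m\<in>head. norm (x m) * (2 * alpha_l1)))"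
proof -
  have "(\<lambda>n. extension x 0 n t) = (\<lambda>n. (if n \<in> head then x n else 0) + (\<Sum>m\<in>head. x m * unit_response m n t))"
    by (rule ext) (simp add: extension_def tail_part_def in_head_iff neumann_sum_head)
  moreover have "l2_bounded (\<lambda>n. if n \<in> head then x n else 0) (\<Sum>n\<in>head. norm (x n))"
    using l2_bounded_finite_support[OF finite_head, of "\<lambda>n. if n \<in> head then x n else 0"]
    by (simp cong: sum.cong)
  moreover have "l2_bounded (\<lambda>n. \<Sum>m\<in>head. x m * unit_response m n t) (\<Sum>m\<in>head. norm (x m) * (2 * alpha_l1))"
  proof (rule l2_bounded_sum[OF finite_head])
    show "l2_bounded (\<lambda>n. x m * unit_response m n t) (norm (x m) * (2 * alpha_l1))" for m
      by (rule l2_bounded_scale[OF _ _ l2_bounded_unit_response[OF t, of m]]) (simp_all add: norm_mult)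
  qed
  ultimately show ?thesis by (simp add: l2_bounded_add)
qed

lemma head_matrix_injective_at_0:
  assumes x: "\<And>n. n \<in> head \<Longrightarrow> (\<Sum>m\<in>head. head_matrix n m 0 * x m) = 0" and m: "m \<in> head"
  shows "x m = 0"
proof -
  have t: "(0::complex) \<in> ball 0 r0" using r0 by simp
  define q where "q n = extension x 0 n 0" for n
  obtain B where q_l2: "l2_bounded q B"
    unfolding q_def using l2_bounded_homogeneous_extension[OF t] by blast
  have hom: "\<sigma> n 0 * q n + 4 * pi * (\<Sum>\<^sub>\<infinity>k. \<alpha> k * q (n + k)) = 0" for n
  proof (cases "N \<le> \<bar>n\<bar>")
    case True
    then show ?thesis
      using extension_tail_equation[OF t True, of x 0] tail_coeff_small(3)[OF t True]
      by (simp add: q_def field_simps)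
  next
    case False
    then have "n \<in> head" by (simp add: in_head_iff)
    then show ?thesis
      using head_row_identity[OF t, of n x 0] x by (simp add: q_def extension_def)
  qed
  have "q m = 0"
  proof (rule generic_vanishes[OF generic alpha_summable l2_bounded_norm_le[OF q_l2]])
    show "q n = 0" if "n < 0" for n by (rule homogeneous_solution_vanishes_on_negatives[OF q_l2 hom that])
    show "(\<Sum>\<^sub>\<infinity>k. \<alpha> k * q (n + k)) = 0" if "q n = 0" for n using hom[of n] that by simp
  qed
  then show ?thesis using m by (simp add: q_def extension_def)
qed

section \<open>The solution as a holomorphic function of \<open>t\<close>\<close>

text \<open>The head \<open>{-(N - 1)..N - 1}\<close> is enumerated by \<open>0..<head_dim\<close>, so that the head system becomes a
  matrix equation.\<close>
definition head_dim :: nat where "head_dim = nat (2 * N - 1)"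
definition head_index :: "nat \<Rightarrow> int" where "head_index i = int i - (N - 1)"
definition head_pos :: "int \<Rightarrow> nat" where "head_pos n = nat (n + (N - 1))"

lemma head_index_in_head: "i < head_dim \<Longrightarrow> head_index i \<in> head"
  unfolding head_dim_def head_index_def head_def using N_pos by auto

lemma head_pos_less: "n \<in> head \<Longrightarrow> head_pos n < head_dim"
  unfolding head_dim_def head_pos_def head_def using N_pos by auto

lemma head_index_pos: "n \<in> head \<Longrightarrow> head_index (head_pos n) = n"
  unfolding head_pos_def head_index_def head_def using N_pos by auto

lemma head_pos_index: "i < head_dim \<Longrightarrow> head_pos (head_index i) = i"
  unfolding head_pos_def head_index_def head_dim_def using N_pos by auto

lemma sum_head_reindex: "(\<Sum>m\<in>head. g m) = (\<Sum>i<head_dim. g (head_index i))"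
  by (rule sum.reindex_bij_witness[where i = head_index and j = head_pos])
     (auto simp: head_index_in_head head_pos_less head_index_pos head_pos_index)

definition head_mat :: "complex \<Rightarrow> complex mat" where
  "head_mat t = mat head_dim head_dim (\<lambda>(i, j). head_matrix (head_index i) (head_index j) t)"

definition head_vec :: "complex \<Rightarrow> complex vec" where
  "head_vec t = vec head_dim (\<lambda>i. head_rhs (head_index i) t)"

definition head_det :: "complex \<Rightarrow> complex" where "head_det t = det (head_mat t)"

lemma head_mat_mult_vec:
  assumes "dim_vec v = head_dim" "i < head_dim"
  shows "(head_mat t *\<^sub>v v) $ i = (\<Sum>j<head_dim. head_matrix (head_index i) (head_index j) t * v $ j)"
  using assms by (simp add: head_mat_def scalar_prod_def lessThan_atLeast0)

lemma holomorphic_head_matrix: "(\<lambda>t. head_matrix n m t) holomorphic_on ball 0 r0"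
proof -
  have "(\<lambda>t. \<Sum>\<^sub>\<infinity>k. \<alpha> k * unit_response m (n + k) t) holomorphic_on ball 0 r0"
  proof (rule holomorphic_on_infsum[where M = "\<lambda>k. norm (\<alpha> k) * (2 * alpha_l1)"])
    show "(\<lambda>t. \<alpha> k * unit_response m (n + k) t) holomorphic_on ball 0 r0" for k
      by (intro holomorphic_intros holomorphic_unit_response)
    show "norm (\<alpha> k * unit_response m (n + k) t) \<le> norm (\<alpha> k) * (2 * alpha_l1)" if "t \<in> ball 0 r0" for k t
      unfolding norm_mult by (rule mult_left_mono[OF norm_unit_response_le[OF that]]) simp
  qed (use summable_on_cmult_left[OF alpha_summable] alpha_l1_nonneg in auto)
  moreover have "(\<lambda>t. if n = m then \<sigma> n t else 0) holomorphic_on ball 0 r0"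
    by (cases "n = m") (simp_all add: holomorphic_branch_root)
  ultimately show ?thesis unfolding head_matrix_def by (intro holomorphic_intros)
qed

lemma holomorphic_head_rhs: "(\<lambda>t. head_rhs n t) holomorphic_on ball 0 r0"
proof -
  have "(\<lambda>t. \<Sum>\<^sub>\<infinity>k. \<alpha> k * inhom_response (n + k) t) holomorphic_on ball 0 r0"
  proof (rule holomorphic_on_infsum[where M = "\<lambda>k. norm (\<alpha> k) * (2 * sqrt (2 * pi))"])
    show "(\<lambda>t. \<alpha> k * inhom_response (n + k) t) holomorphic_on ball 0 r0" for k
      by (intro holomorphic_intros holomorphic_inhom_response)
    show "norm (\<alpha> k * inhom_response (n + k) t) \<le> norm (\<alpha> k) * (2 * sqrt (2 * pi))" if "t \<in> ball 0 r0" for k t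
      unfolding norm_mult by (rule mult_left_mono[OF norm_inhom_response_le[OF that]]) simp
  qed (use summable_on_cmult_left[OF alpha_summable] in auto)
  then show ?thesis unfolding head_rhs_def
    by (intro holomorphic_intros holomorphic_branch_root) (use one_plus_branch_root_nonzero in auto)
qed

lemma holomorphic_head_det: "head_det holomorphic_on ball 0 r0"
  unfolding head_det_def[abs_def] head_mat_def
  by (rule holomorphic_on_det_mat) (rule holomorphic_head_matrix)

lemma head_det_0_nonzero: "head_det 0 \<noteq> 0"
proof
  assume "head_det 0 = 0"
  then obtain v where v: "v \<in> carrier_vec head_dim" "v \<noteq> 0\<^sub>v head_dim" "head_mat 0 *\<^sub>v v = 0\<^sub>v head_dim"
    using det_0_iff_vec_prod_zero[of "head_mat 0" head_dim] unfolding head_det_def head_mat_def by auto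
  define x where "x n = (if n \<in> head then v $ head_pos n else 0)" for n
  have x_index: "x (head_index i) = v $ i" if "i < head_dim" for i
    using that by (simp add: x_def head_index_in_head head_pos_index)
  have "x m = 0" if m: "m \<in> head" for m
  proof (rule head_matrix_injective_at_0[OF _ m])
    fix n assume n: "n \<in> head"
    have "(\<Sum>m\<in>head. head_matrix n m 0 * x m) = (head_mat 0 *\<^sub>v v) $ head_pos n"
      using v(1) head_pos_less[OF n] head_index_pos[OF n]
      by (simp add: sum_head_reindex head_mat_mult_vec x_index)
    then show "(\<Sum>m\<in>head. head_matrix n m 0 * x m) = 0" using v(3) head_pos_less[OF n] by simp
  qed
  then have "v = 0\<^sub>v head_dim" using v(1) x_index head_index_in_head by (intro eq_vecI) auto
  then show False using v(2) by simp
qed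

lemma exists_radius_head_det_nonzero: "\<exists>r. 0 < r \<and> r \<le> r0 \<and> (\<forall>t\<in>ball 0 r. head_det t \<noteq> 0)"
proof -
  have "continuous (at 0) head_det"
    using holomorphic_on_imp_continuous_on[OF holomorphic_head_det] r0
      continuous_on_eq_continuous_at[of "ball 0 r0" head_det] by simp
  then obtain e where e: "e > 0" "\<And>y. dist 0 y < e \<Longrightarrow> head_det y \<noteq> 0"
    using continuous_at_avoid[of 0 head_det 0] head_det_0_nonzero by blast
  show ?thesis by (rule exI[of _ "min e r0"]) (use e r0 in \<open>auto simp: dist_norm\<close>)
qed

definition cramer_solution :: "nat \<Rightarrow> complex \<Rightarrow> complex" where
  "cramer_solution i t = det (replace_col (head_mat t) (head_vec t) i) / head_det t"

definition solution :: "int \<Rightarrow> complex \<Rightarrow> complex" where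
  "solution n t = extension (\<lambda>m. cramer_solution (head_pos m) t) 1 n t"

lemma holomorphic_cramer_solution:
  assumes r: "r \<le> r0" "\<forall>t\<in>ball 0 r. head_det t \<noteq> 0"
  shows "cramer_solution i holomorphic_on ball 0 r"
proof -
  have sub: "ball 0 r \<subseteq> ball (0::complex) r0" using r by auto
  have "replace_col (head_mat t) (head_vec t) i = mat head_dim head_dim
      (\<lambda>(k, j). if j = i then head_rhs (head_index k) t else head_matrix (head_index k) (head_index j) t)" for t
    by (rule eq_matI) (auto simp: replace_col_def head_mat_def head_vec_def)
  moreover have "(\<lambda>t. det (mat head_dim head_dim
      (\<lambda>(k, j). if j = i then head_rhs (head_index k) t else head_matrix (head_index k) (head_index j) t)))
      holomorphic_on ball 0 r0"
  proof (rule holomorphic_on_det_mat)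
    fix k j
    show "(\<lambda>t. if j = i then head_rhs (head_index k) t else head_matrix (head_index k) (head_index j) t)
        holomorphic_on ball 0 r0"
      by (cases "j = i") (simp_all add: holomorphic_head_rhs holomorphic_head_matrix)
  qed
  ultimately have "(\<lambda>t. det (replace_col (head_mat t) (head_vec t) i)) holomorphic_on ball 0 r" 
    using sub holomorphic_on_subset by auto
  then show ?thesis
    unfolding cramer_solution_def[abs_def]
    using holomorphic_on_subset[OF holomorphic_head_det sub] r by (intro holomorphic_intros) auto
qed

lemma holomorphic_solution:
  assumes r: "r \<le> r0" "\<forall>t\<in>ball 0 r. head_det t \<noteq> 0"
  shows "solution n holomorphic_on ball 0 r"
proof -
  have sub: "ball 0 r \<subseteq> ball (0::complex) r0" using r by auto
  show ?thesis
  proof (cases "n \<in> head")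
    case True
    then show ?thesis using holomorphic_cramer_solution[OF r]
      by (simp add: solution_def[abs_def] extension_def)
  next
    case False
    then have "solution n = (\<lambda>t. 1 * inhom_response n t + (\<Sum>m\<in>head. cramer_solution (head_pos m) t * unit_response m n t))"
      by (simp add: solution_def[abs_def] extension_def tail_part_def)
    then show ?thesis
      using holomorphic_cramer_solution[OF r] holomorphic_on_subset[OF holomorphic_inhom_response sub]
        holomorphic_on_subset[OF holomorphic_unit_response sub]
      by (auto intro!: holomorphic_intros)
  qed
qed

lemma bounded_solution_eq_solution:
  assumes r: "r \<le> r0" "\<forall>t\<in>ball 0 r. head_det t \<noteq> 0" and t: "t \<in> ball 0 r"
    and nonzero: "\<And>n. \<sigma> n t \<noteq> 0" and q: "\<And>m. norm (q m) \<le> C"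
    and eq: "\<And>n. q n = - (4 * pi / \<sigma> n t) * (\<Sum>\<^sub>\<infinity>k. \<alpha> k * q (n + k))
                        - inhom_coeff / (\<sigma> n t * (1 + \<sigma> n t))"
  shows "q n = solution n t"
proof -
  have t0: "t \<in> ball 0 r0" using t r by auto
  define v where "v = vec head_dim (\<lambda>i. q (head_index i))"
  have system: "head_mat t *\<^sub>v v = head_vec t"
  proof (rule eq_vecI)
    fix i assume "i < dim_vec (head_vec t)"
    then have i: "i < head_dim" by (simp add: head_vec_def)
    have "(head_mat t *\<^sub>v v) $ i = (\<Sum>m\<in>head. head_matrix (head_index i) m t * q m)"
      using i by (simp add: head_mat_mult_vec v_def sum_head_reindex)
    also have "\<dots> = head_rhs (head_index i) t"
      by (rule head_rows_of_solution[OF t0 nonzero q eq head_index_in_head[OF i]])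
    finally show "(head_mat t *\<^sub>v v) $ i = head_vec t $ i" using i by (simp add: head_vec_def)
  qed (simp add: head_mat_def head_vec_def)
  have head: "q m = cramer_solution (head_pos m) t" if m: "m \<in> head" for m
  proof -
    have "det (replace_col (head_mat t) (head_mat t *\<^sub>v v) (head_pos m)) = v $ head_pos m * det (head_mat t)"
      by (rule cramer_lemma_mat[where n = head_dim]) (simp_all add: head_mat_def v_def head_pos_less[OF m])
    then have "det (replace_col (head_mat t) (head_vec t) (head_pos m)) = q m * head_det t"
      using system head_pos_less[OF m] head_index_pos[OF m] by (simp add: v_def head_det_def)
    then show ?thesis using r t by (simp add: cramer_solution_def)
  qed
  have "q n = extension q 1 n t" by (rule bounded_solution_eq_extension[OF t0 nonzero q eq])
  also have "\<dots> = solution n t"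
    using head by (simp add: solution_def extension_def tail_part_def)
  finally show ?thesis .
qed

lemma imaginary_axis_solution_eq:
  assumes alpha0: "\<alpha> 0 = 0" and r: "0 < r" "r \<le> r0" "\<forall>t\<in>ball 0 r. head_det t \<noteq> 0"
    and y: "0 < y" "y < r^2" and q: "(\<lambda>n. (norm (q n))^2) summable_on UNIV"
    and eq: "imaginary_axis_system \<omega> \<alpha> y q"
  shows "q n = solution n (of_real (sqrt y))"
proof -
  define t where "t = complex_of_real (sqrt y)"
  have "sqrt y < sqrt (r^2)" using y by (intro real_sqrt_less_mono) auto
  then have "sqrt y < r" using r by simp
  then have t: "t \<in> ball 0 r" using y by (simp add: t_def)
  have "r^2 \<le> r0^2" using r y by (intro power_mono) auto
  then have "y < \<omega>" using y r0 omega_pos by linarith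
  show ?thesis unfolding t_def[symmetric]
  proof (rule bounded_solution_eq_solution[OF r(2,3) t _ norm_le_sqrt_infsum_sq[OF q]])
    show "\<sigma> m t \<noteq> 0" for m
      using branch_root_nonzero[of t m] t r y by (cases "m = 0") (auto simp: t_def)
    have sum_without_0: "infsum (\<lambda>k. \<alpha> k * q (n + k)) (UNIV - {0}) = (\<Sum>\<^sub>\<infinity>k. \<alpha> k * q (n + k))" for n
      by (rule infsum_cong_neutral) (use alpha0 in auto)
    show "q n = - (4 * pi / \<sigma> n t) * (\<Sum>\<^sub>\<infinity>k. \<alpha> k * q (n + k)) - inhom_coeff / (\<sigma> n t * (1 + \<sigma> n t))" for n
      using eq[unfolded imaginary_axis_system_def, rule_format, of n]
      unfolding csqrt_eq_branch_root[OF y(1) \<open>y < \<omega>\<close>] sum_without_0 t_def inhom_coeff_def .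
  qed
qed

lemma solution_sqrt_form:
  assumes alpha0: "\<alpha> 0 = 0"
  obtains r c d where "0 < r" and "\<And>n. c n analytic_on {0} \<and> d n analytic_on {0}"
    and "\<And>y q n. 0 < y \<Longrightarrow> y < r^2 \<Longrightarrow> (\<lambda>n. (norm (q n))^2) summable_on UNIV \<Longrightarrow>
           imaginary_axis_system \<omega> \<alpha> y q \<Longrightarrow>
           q n = c n (\<i> * of_real y) + d n (\<i> * of_real y) * csqrt (\<i> * of_real y)"
proof -
  obtain r where r: "0 < r" "r \<le> r0" "\<forall>t\<in>ball 0 r. head_det t \<noteq> 0"
    using exists_radius_head_det_nonzero by blast
  have "\<forall>n. \<exists>c d. c analytic_on {0} \<and> d analytic_on {0} \<and> (\<forall>y. 0 < y \<and> y < r^2 \<longrightarrow>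
      solution n (of_real (sqrt y)) = c (\<i> * of_real y) + d (\<i> * of_real y) * csqrt (\<i> * of_real y))"
    using holomorphic_sqrt_decomposition[OF holomorphic_solution[OF r(2,3)] r(1)] by blast
  then obtain c d where cd: "\<And>n. c n analytic_on {0} \<and> d n analytic_on {0} \<and> (\<forall>y. 0 < y \<and> y < r^2 \<longrightarrow>
      solution n (of_real (sqrt y)) = c n (\<i> * of_real y) + d n (\<i> * of_real y) * csqrt (\<i> * of_real y))"
    by metis
  show ?thesis
  proof (rule that[OF r(1)])
    show "c n analytic_on {0} \<and> d n analytic_on {0}" for n using cd by blast
    fix y q n
    assume y: "0 < y" "y < r^2" and q: "(\<lambda>n. (norm (q n))^2) summable_on UNIV" "imaginary_axis_system \<omega> \<alpha> y q"
    have "q n = solution n (of_real (sqrt y))" by (rule imaginary_axis_solution_eq[OF alpha0 r y q])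
    then show "q n = c n (\<i> * of_real y) + d n (\<i> * of_real y) * csqrt (\<i> * of_real y)"
      using cd[of n] y by simp
  qed
qed

end

lemma exists_generic_tail_contraction:
  fixes \<omega> :: real and \<alpha> :: "int \<Rightarrow> complex"
  assumes "\<omega> > 0" "(\<lambda>k. norm (\<alpha> k)) summable_on UNIV" "\<And>n. \<alpha> n = cnj (\<alpha> (- n))" "generic \<alpha>"
  shows "\<exists>N r0. generic_tail_contraction \<omega> \<alpha> N r0"
proof -
  define X where "X = (8 * pi * ((\<Sum>\<^sub>\<infinity>k. norm (\<alpha> k)) + 1))^2"
  define N :: int where "N = \<lceil>2 * X / \<omega>\<rceil> + 1"
  define r0 where "r0 = min (1/2) (sqrt (\<omega> / 2))"
  have "0 \<le> 2 * X / \<omega>" using assms(1) by (simp add: X_def)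
  then have N: "N \<ge> 1" by (simp add: N_def)
  have "2 * X / \<omega> \<le> of_int N" unfolding N_def using le_of_int_ceiling[of "2 * X / \<omega>"] by linarith
  then have N_large: "X \<le> \<omega> * of_int N / 2" using assms(1) by (simp add: field_simps)
  have r0: "0 < r0" "r0 \<le> 1/2" using assms(1) by (simp_all add: r0_def)
  have "r0^2 \<le> (sqrt (\<omega> / 2))^2" using r0 by (intro power_mono) (auto simp: r0_def)
  then have "r0^2 \<le> \<omega> / 2" using assms(1) by simp
  then have "generic_tail_contraction \<omega> \<alpha> N r0"
    using assms N N_large r0 unfolding X_def
    by (intro generic_tail_contraction.intro tail_contraction.intro generic_tail_contraction_axioms.intro)
  then show ?thesis by blast
qed

theorem mainTheorem13:
  fixes \<omega> :: real and \<alpha> :: "int \<Rightarrow> complex"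
  assumes "\<omega> > 0"
    and "(\<lambda>n. norm (\<alpha> n)) summable_on UNIV"
    and "\<And>n. \<alpha> n = cnj (\<alpha> (- n))"
    and "\<alpha> 0 = 0"
    and "infsum \<alpha> UNIV = - 1 / (4 * pi)"
    and "generic \<alpha>"
  shows "\<exists>\<epsilon>>0. \<exists>c d :: int \<Rightarrow> complex \<Rightarrow> complex.
     (\<forall>n. c n analytic_on {0} \<and> d n analytic_on {0}) \<and>
     (\<forall>y::real. 0 < y \<and> y < \<epsilon> \<longrightarrow>
        (let p = \<i> * complex_of_real y in
         \<forall>q :: int \<Rightarrow> complex.
           ((\<lambda>n. (norm (q n))^2) summable_on UNIV) \<and>
           (\<forall>n. q n =
              - (4 * pi / csqrt (of_real (\<omega> * of_int n) - \<i> * p)) *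
                  infsum (\<lambda>k. \<alpha> k * q (n + k)) (UNIV - {0})
              - 2 * \<i> * sqrt (2 * pi) /
                  (csqrt (of_real (\<omega> * of_int n) - \<i> * p) *
                   (1 + csqrt (of_real (\<omega> * of_int n) - \<i> * p))))
           \<longrightarrow> (\<forall>n. q n = c n p + d n p * csqrt p)))"
proof -
  obtain N r0 where "generic_tail_contraction \<omega> \<alpha> N r0"
    using exists_generic_tail_contraction[OF assms(1-3,6)] by blast
  then interpret generic_tail_contraction \<omega> \<alpha> N r0 .
  obtain r c d where "0 < r" and "\<And>n. c n analytic_on {0} \<and> d n analytic_on {0}"
    and "\<And>y q n. 0 < y \<Longrightarrow> y < r^2 \<Longrightarrow> (\<lambda>n. (norm (q n))^2) summable_on UNIV \<Longrightarrow>
           imaginary_axis_system \<omega> \<alpha> y q \<Longrightarrow>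
           q n = c n (\<i> * of_real y) + d n (\<i> * of_real y) * csqrt (\<i> * of_real y)"
    using solution_sqrt_form[OF assms(4)] by blast
  moreover have "r^2 > 0" using \<open>0 < r\<close> by simp
  ultimately show ?thesis unfolding Let_def imaginary_axis_system_def[symmetric] by blast
qed

end
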